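(* Let $\mathbb N^*$ be a nonempty subset of $\mathbb N$. Then for any given maps $\omega:\mathbb N^*\to\mathcal A$ and $\alpha:\mathbb N^*\to\mathcal A'$, there exist a family $\{S_n:n\in\mathbb N^*\}$ of pairwise disjoint countable subsets of $(-1,1)$ and a normally rising homeomorphism $f:J^2\to J^2$ such that, for every $n\in\mathbb N^*$, $S_n$ is dense in $J$, and $\omega_f(r,s)=\omega(n)$ and $\alpha_f(r,s)=\alpha(n)$ for every $(r,s)\in(-1,1)\times S_n$.
   Context: $J=[-1,1]$, and for $s\in J$, $J_s=J\times\{s\}$. $\mathcal A$ denotes the collection of all nonempty connected closed subsets of $J_1$, and $\mathcal A'$ the collection of all nonempty connected closed subsets of $J_{-1}$. Define $f_{01}:J\to J$ by $f_{01}(s)=(s+1)/2$ if $0\le s\le 1$, $f_{01}(s)=s+1/2$ if $-1/2\le s\le 0$, $f_{01}(s)=2s+1$ if $-1\le s\le -1/2$, and $f_{02}:J^2\to J^2$ by $f_{02}(r,s)=(r,f_{01}(s))$. A homeomorphism $f:J^2\to J^2$ is normally rising if $f|\partial J^2=f_{02}|\partial J^2$ (where $\partial J^2$ is the boundary of the square) and $f(J_s)=f_{02}(J_s)$ for every $s\in J$. For a homeomorphism $g$ and a point $x$, $\omega_g(x)$ is the $\omega$-limit set of $x$ (the set of limits of $g^{n_i}(x)$ over increasing sequences of positive integers $n_i$) and $\alpha_g(x)=\omega_{g^{-1}}(x)$ is the $\alpha$-limit set. *)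

theory Defs
  imports "HOL-Analysis.Analysis"
begin

definition JJ :: "real set" where "JJ = {-1..1}"

definition Jline :: "real \<Rightarrow> (real \<times> real) set" where
  "Jline s = JJ \<times> {s}"

definition sq :: "(real \<times> real) set" where "sq = JJ \<times> JJ"

definition calA :: "(real \<times> real) set set" where
  "calA = {C. C \<noteq> {} \<and> connected C \<and> closed C \<and> C \<subseteq> Jline 1}"

definition calA' :: "(real \<times> real) set set" where
  "calA' = {C. C \<noteq> {} \<and> connected C \<and> closed C \<and> C \<subseteq> Jline (-1)}"

definition f01 :: "real \<Rightarrow> real" where
  "f01 s = (if 0 \<le> s then (s + 1) / 2 else if -1/2 \<le> s then s + 1/2 else 2 * s + 1)"

definition f02 :: "real \<times> real \<Rightarrow> real \<times> real" where
  "f02 p = (fst p, f01 (snd p))"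

definition normally_rising :: "(real \<times> real \<Rightarrow> real \<times> real) \<Rightarrow> bool" where
  "normally_rising f \<longleftrightarrow>
     (\<exists>g. homeomorphism sq sq f g) \<and>
     (\<forall>p \<in> frontier sq. f p = f02 p) \<and>
     (\<forall>s \<in> JJ. f ` Jline s = f02 ` Jline s)"

definition omega_limit :: "('a \<Rightarrow> 'a) \<Rightarrow> 'a \<Rightarrow> 'a::topological_space set" where
  "omega_limit g x = {y. \<exists>n::nat \<Rightarrow> nat. strict_mono n \<and> (\<forall>i. 0 < n i) \<and>
                         ((\<lambda>i. (g ^^ n i) x) \<longlongrightarrow> y) sequentially}"

definition alpha_limit :: "(real \<times> real \<Rightarrow> real \<times> real) \<Rightarrow> real \<times> real \<Rightarrow> (real \<times> real) set" where
  "alpha_limit f x = omega_limit (inv_into sq f) x"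

end

theory Submission
  imports Defs "HOL-Real_Asymp.Real_Asymp"
begin

lemma f01_eq_min: "f01 s = min (2 * s + 1) (min (s + 1/2) ((s + 1) / 2))"
  unfolding f01_def by auto

lemma continuous_on_f01: "continuous_on S f01"
  unfolding f01_eq_min[abs_def] by (intro continuous_intros) auto

definition f01_inv :: "real \<Rightarrow> real" where
  "f01_inv s = - f01 (- s)"

lemma f01_inv_f01 [simp]: "f01_inv (f01 s) = s"
  and f01_f01_inv [simp]: "f01 (f01_inv s) = s"
  unfolding f01_inv_def f01_def by (auto simp: field_simps)

lemma f01_endpoints [simp]: "f01 1 = 1" "f01 (-1) = -1"
  and f01_inv_endpoints [simp]: "f01_inv 1 = 1" "f01_inv (-1) = -1"
  unfolding f01_inv_def f01_def by auto

lemma f01_mem_open: "s \<in> {-1<..<1} \<Longrightarrow> f01 s \<in> {-1<..<1}"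
  and f01_inv_mem_open: "s \<in> {-1<..<1} \<Longrightarrow> f01_inv s \<in> {-1<..<1}"
  unfolding f01_inv_def f01_def by auto

lemma f01_mem_closed: "s \<in> {-1..1} \<Longrightarrow> f01 s \<in> {-1..1}"
  and f01_inv_mem_closed: "s \<in> {-1..1} \<Longrightarrow> f01_inv s \<in> {-1..1}"
  unfolding f01_inv_def f01_def by auto

lemma f01_upper: "0 \<le> s \<Longrightarrow> f01 s = (s + 1) / 2"
  and f01_middle: "-1/2 \<le> s \<Longrightarrow> s < 0 \<Longrightarrow> f01 s = s + 1/2"
  and f01_lower: "s < -1/2 \<Longrightarrow> f01 s = 2 * s + 1"
  unfolding f01_def by auto

section \<open>Homeomorphisms of $[-1,1]$ squeezing onto a point\<close>

definition push_up :: "real \<Rightarrow> real \<Rightarrow> real" where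
  "push_up K r = K * (1 + r) / (K * (1 + r) + (1 - r))"

definition squeeze :: "real \<Rightarrow> real \<Rightarrow> real \<Rightarrow> real" where
  "squeeze c K r = (1 + c) * push_up K r + (1 - c) * (1 - push_up K (- r)) - 1"

lemma push_up_denom_ge:
  fixes K r :: real
  assumes "K \<ge> 1" "r \<in> {-1..1}"
  shows "K * (1 + r) + (1 - r) \<ge> 2"
  using assms mult_right_mono[of 1 K "1 + r"] by auto

lemma push_up_mem:
  assumes "K \<ge> 1" "r \<in> {-1..1}"
  shows "push_up K r \<in> {0..1}"
  using push_up_denom_ge[OF assms] assms unfolding push_up_def by (auto simp: divide_simps)

lemma push_up_strict_mono:
  assumes "K \<ge> 1"
  shows "strict_mono_on {-1..1} (push_up K)"
proof (rule strict_mono_onI)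
  fix r1 r2 :: real
  assume r: "r1 \<in> {-1..1}" "r2 \<in> {-1..1}" "r1 < r2"
  have "K * (1 + r1) * (K * (1 + r2) + (1 - r2)) < K * (1 + r2) * (K * (1 + r1) + (1 - r1))"
    using assms r by (auto simp: algebra_simps)
  then show "push_up K r1 < push_up K r2"
    using push_up_denom_ge[OF assms r(1)] push_up_denom_ge[OF assms r(2)]
    unfolding push_up_def by (simp add: divide_simps)
qed

lemma push_up_gap:
  assumes "K \<ge> 1" "r \<in> {-1<..<1}"
  shows "1 - push_up K r \<le> (1 - r) / (1 + r) / K"
proof -
  have "1 - push_up K r = (1 - r) / (K * (1 + r) + (1 - r))"
    using push_up_denom_ge[of K r] assms unfolding push_up_def by (simp add: field_simps)
  also have "\<dots> \<le> (1 - r) / (K * (1 + r))"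
    using assms push_up_denom_ge[of K r] by (intro divide_left_mono mult_pos_pos) auto
  finally show ?thesis by (simp add: field_simps)
qed

lemma push_up_param_diff:
  assumes "K \<ge> 1" "K' \<ge> 1" "r \<in> {-1..1}"
  shows "\<bar>push_up K r - push_up K' r\<bar> \<le> \<bar>K - K'\<bar> / K"
proof -
  define D where "D = K * (1 + r) + (1 - r)"
  define D' where "D' = K' * (1 + r) + (1 - r)"
  have D: "D \<ge> 2" "D' \<ge> 2"
    using push_up_denom_ge assms unfolding D_def D'_def by auto
  have "\<bar>push_up K r - push_up K' r\<bar> = (1 + r) * (1 - r) * \<bar>K - K'\<bar> / (D * D')"
  proof -
    have "push_up K r - push_up K' r = (1 + r) * (1 - r) * (K - K') / (D * D')"
      unfolding push_up_def D_def[symmetric] D'_def[symmetric] using D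
      by (simp add: field_simps) (simp add: D_def D'_def algebra_simps)
    then show ?thesis using D assms by (simp add: abs_mult)
  qed
  also have "\<dots> \<le> \<bar>K - K'\<bar> / K"
  proof -
    have "K * (1 + r) \<le> D" "1 - r \<le> D'"
      using assms mult_right_mono[of 1 K' "1 + r"] unfolding D_def D'_def by auto
    then have "K * (1 + r) * (1 - r) \<le> D * D'"
      using assms D by (intro mult_mono) auto
    then have "(1 + r) * (1 - r) / (D * D') \<le> 1 / K"
      using D assms by (simp add: divide_simps) (simp add: algebra_simps)
    then have "(1 + r) * (1 - r) / (D * D') * \<bar>K - K'\<bar> \<le> 1 / K * \<bar>K - K'\<bar>"
      by (rule mult_right_mono) simp
    then show ?thesis by simp
  qed
  finally show ?thesis .
qed

lemma squeeze_endpoints [simp]: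
  assumes "K \<ge> 1"
  shows "squeeze c K 1 = 1" "squeeze c K (-1) = -1"
  using assms unfolding squeeze_def push_up_def by auto

lemma squeeze_strict_mono:
  assumes "K \<ge> 1" "c \<in> {-1..1}"
  shows "strict_mono_on {-1..1} (squeeze c K)"
proof (rule strict_mono_onI)
  fix r1 r2 :: real
  assume r: "r1 \<in> {-1..1}" "r2 \<in> {-1..1}" "r1 < r2"
  have up: "push_up K r1 < push_up K r2" and down: "push_up K (- r2) < push_up K (- r1)"
    using strict_mono_onD[OF push_up_strict_mono[OF assms(1)]] r by auto
  have "(1 + c) * push_up K r1 \<le> (1 + c) * push_up K r2"
    "(1 - c) * push_up K (- r2) \<le> (1 - c) * push_up K (- r1)"
    using up down assms(2) by (auto intro!: mult_left_mono)
  moreover have "(1 + c) * push_up K r1 < (1 + c) * push_up K r2 \<or>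
      (1 - c) * push_up K (- r2) < (1 - c) * push_up K (- r1)"
    using up down assms(2) by (cases "c = 1") auto
  ultimately show "squeeze c K r1 < squeeze c K r2"
    unfolding squeeze_def by (simp add: algebra_simps) linarith
qed

lemma squeeze_mem:
  assumes "K \<ge> 1" "c \<in> {-1..1}" "r \<in> {-1..1}"
  shows "squeeze c K r \<in> {-1..1}"
  using strict_mono_onD[OF squeeze_strict_mono[OF assms(1,2)], of "-1" r]
    strict_mono_onD[OF squeeze_strict_mono[OF assms(1,2)], of r 1] assms
  by (cases "r = -1"; cases "r = 1") auto

lemma squeeze_param_diff:
  assumes "K \<ge> 1" "K' \<ge> 1" "r \<in> {-1..1}" "c \<in> {-1..1}" "c' \<in> {-1..1}"
  shows "\<bar>squeeze c K r - squeeze c' K' r\<bar> \<le> \<bar>c - c'\<bar> + 2 * \<bar>K - K'\<bar> / K"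
proof -
  define d where "d = \<bar>K - K'\<bar> / K"
  define A where "A = push_up K r - push_up K' r"
  define B where "B = push_up K (- r) - push_up K' (- r)"
  have AB: "\<bar>A\<bar> \<le> d" "\<bar>B\<bar> \<le> d"
    unfolding A_def B_def d_def using push_up_param_diff assms by auto
  have "\<bar>push_up K r - (1 - push_up K (- r))\<bar> \<le> 1"
    using push_up_mem[OF assms(1), of r] push_up_mem[OF assms(1), of "- r"] assms(3) by auto
  then have "\<bar>(c - c') * (push_up K r - (1 - push_up K (- r)))\<bar> \<le> \<bar>c - c'\<bar>"
    by (auto simp: abs_mult intro: mult_left_le)
  moreover have "\<bar>(1 + c') * A\<bar> \<le> (1 + c') * d"
    using mult_left_mono[OF AB(1), of "1 + c'"] assms(5) by (simp add: abs_mult)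
  moreover have "\<bar>(1 - c') * B\<bar> \<le> (1 - c') * d"
    using mult_left_mono[OF AB(2), of "1 - c'"] assms(5) by (simp add: abs_mult)
  moreover have "squeeze c K r - squeeze c' K' r =
      (c - c') * (push_up K r - (1 - push_up K (- r))) + (1 + c') * A - (1 - c') * B"
    unfolding squeeze_def A_def B_def by (simp add: algebra_simps)
  ultimately have "\<bar>squeeze c K r - squeeze c' K' r\<bar> \<le> \<bar>c - c'\<bar> + (1 + c') * d + (1 - c') * d"
    by linarith
  moreover have "(1 + c') * d + (1 - c') * d = 2 * d"
    by (simp add: algebra_simps)
  ultimately show ?thesis unfolding d_def by simp
qed

lemma squeeze_near_center:
  assumes "K \<ge> 1" "r \<in> {-1<..<1}" "c \<in> {-1..1}"
  shows "\<bar>squeeze c K r - c\<bar> \<le> 2 * ((1 - r) / (1 + r) + (1 + r) / (1 - r)) / K"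
proof -
  define g where "g = 1 - push_up K r"
  define g' where "g' = 1 - push_up K (- r)"
  have g: "0 \<le> g" "g \<le> (1 - r) / (1 + r) / K"
    using push_up_mem[OF assms(1), of r] push_up_gap[OF assms(1,2)] assms(2) unfolding g_def by auto
  have g': "0 \<le> g'" "g' \<le> (1 + r) / (1 - r) / K"
    using push_up_mem[OF assms(1), of "- r"] push_up_gap[OF assms(1), of "- r"] assms(2)
    unfolding g'_def by auto
  have "squeeze c K r - c = (1 - c) * g' - (1 + c) * g"
    unfolding squeeze_def g_def g'_def by (simp add: algebra_simps)
  moreover have "0 \<le> (1 - c) * g'" "(1 - c) * g' \<le> 2 * g'"
    using g' assms(3) by (auto intro: mult_right_mono)
  moreover have "0 \<le> (1 + c) * g" "(1 + c) * g \<le> 2 * g"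
    using g assms(3) by (auto intro: mult_right_mono)
  ultimately have "\<bar>squeeze c K r - c\<bar> \<le> 2 * g' + 2 * g"
    by (simp only: abs_le_iff) linarith
  also have "\<dots> \<le> 2 * ((1 + r) / (1 - r) / K) + 2 * ((1 - r) / (1 + r) / K)"
    using g g' by linarith
  finally show ?thesis by (simp add: add_divide_distrib algebra_simps)
qed

definition depth :: "real \<Rightarrow> real" where
  "depth s = max 0 (- log 2 (1 - s)) + max 0 (- log 2 (1 + s) - 1)"

definition slow_time :: "real \<Rightarrow> real" where
  "slow_time s = sqrt (depth s)"

definition squeeze_factor :: "real \<Rightarrow> real" where
  "squeeze_factor s = 1 + depth s"

lemma depth_nonneg: "depth s \<ge> 0"
  unfolding depth_def by auto

lemma slow_time_nonneg: "slow_time s \<ge> 0"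
  unfolding slow_time_def using depth_nonneg by auto

lemma squeeze_factor_ge_1: "squeeze_factor s \<ge> 1"
  unfolding squeeze_factor_def using depth_nonneg by auto

lemma continuous_on_depth: "continuous_on {-1<..<1} depth"
  unfolding depth_def by (intro continuous_intros) auto

lemma continuous_on_slow_time: "continuous_on {-1<..<1} slow_time"
  unfolding slow_time_def by (intro continuous_intros continuous_on_depth)

lemma continuous_on_squeeze_factor: "continuous_on {-1<..<1} squeeze_factor"
  unfolding squeeze_factor_def by (intro continuous_intros continuous_on_depth)

lemma depth_upper:
  assumes "0 \<le> s" "s < 1"
  shows "depth s = - log 2 (1 - s)"
proof -
  have "log 2 (1 - s) \<le> 0" "log 2 (1 + s) \<ge> 0"
    using assms by simp_all
  then show ?thesis unfolding depth_def by auto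
qed

lemma depth_lower:
  assumes "-1 < s" "s \<le> 0"
  shows "depth s = max 0 (- log 2 (1 + s) - 1)"
proof -
  have "log 2 (1 - s) \<ge> 0" using assms by simp
  then show ?thesis unfolding depth_def by auto
qed

lemma depth_f01_upper:
  assumes "0 \<le> s" "s < 1"
  shows "depth (f01 s) = depth s + 1"
proof -
  have "0 \<le> f01 s" "f01 s < 1" and e: "1 - f01 s = (1 - s) / 2"
    using assms by (auto simp: f01_upper field_simps)
  then have "depth (f01 s) = - log 2 ((1 - s) / 2)"
    by (simp only: depth_upper e)
  also have "\<dots> = - log 2 (1 - s) + 1"
    using assms by (simp add: log_divide)
  finally show ?thesis using assms by (simp add: depth_upper)
qed

lemma depth_f01_lower:
  assumes "-1 < s" "s < -1/2"
  shows "depth (f01 s) = max 0 (depth s - 1)"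
proof -
  have "log 2 (1 + s) \<le> log 2 (1/2)" using assms by simp
  then have "depth s = - log 2 (1 + s) - 1"
    using assms by (simp add: depth_lower log_divide)
  moreover have "-1 < f01 s" "f01 s \<le> 0" and e: "1 + f01 s = 2 * (1 + s)"
    using assms by (auto simp: f01_lower)
  then have "depth (f01 s) = max 0 (- log 2 (2 * (1 + s)) - 1)"
    by (simp only: depth_lower e)
  moreover have "log 2 (2 * (1 + s)) = 1 + log 2 (1 + s)"
    using assms by (subst log_mult) auto
  ultimately show ?thesis by simp
qed

lemma depth_f01_diff:
  assumes "s \<in> {-1<..<1}" "0 \<le> s \<or> s < -1/2"
  shows "\<bar>depth (f01 s) - depth s\<bar> \<le> 1"
  using assms depth_f01_upper[of s] depth_f01_lower[of s] depth_nonneg[of s] by auto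

lemma depth_tendsto_upper: "filterlim depth at_top (at_left 1)"
proof -
  have "eventually (\<lambda>s. s \<in> {0<..<1}) (at_left (1::real))"
    by (rule eventually_at_left_real) simp
  then have ev: "eventually (\<lambda>s. - log 2 (1 - s) = depth s) (at_left 1)"
    by eventually_elim (simp add: depth_upper)
  have "filterlim (\<lambda>s::real. - log 2 (1 - s)) at_top (at_left 1)"
    by real_asymp
  then show ?thesis using filterlim_cong[OF refl refl ev] by simp
qed

lemma depth_tendsto_lower: "filterlim depth at_top (at_right (-1))"
proof -
  have "eventually (\<lambda>s. s \<in> {-1<..<-1/2}) (at_right (-1::real))"
    by (rule eventually_at_right_real) simp
  then have ev: "eventually (\<lambda>s. - log 2 (1 + s) - 1 = depth s) (at_right (-1))"
  proof eventually_elim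
    case (elim s)
    then have "log 2 (1 + s) \<le> log 2 (1/2)" by simp
    then show ?case using elim by (simp add: depth_lower log_divide)
  qed
  have "filterlim (\<lambda>s::real. - log 2 (1 + s) - 1) at_top (at_right (-1))"
    by real_asymp
  then show ?thesis using filterlim_cong[OF refl refl ev] by simp
qed

lemma abs_sqrt_diff_le:
  fixes a b :: real
  assumes "a > 0" "b \<ge> 0"
  shows "\<bar>sqrt a - sqrt b\<bar> \<le> \<bar>a - b\<bar> / sqrt a"
proof -
  have "(sqrt a - sqrt b) * (sqrt a + sqrt b) = a - b"
    using assms by (simp add: algebra_simps)
  then have "\<bar>sqrt a - sqrt b\<bar> * (sqrt a + sqrt b) = \<bar>a - b\<bar>"
    using assms by (metis abs_mult abs_of_nonneg add_nonneg_nonneg real_sqrt_ge_zero less_imp_le)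
  moreover have "\<bar>sqrt a - sqrt b\<bar> * sqrt a \<le> \<bar>sqrt a - sqrt b\<bar> * (sqrt a + sqrt b)"
    using assms by (intro mult_left_mono) auto
  ultimately show ?thesis using assms by (simp add: divide_simps)
qed

lemma continuous_on_comp_frac:
  fixes h :: "real \<Rightarrow> 'a::topological_space"
  assumes h: "continuous_on {0..1} h" and h01: "h 0 = h 1"
  shows "continuous_on UNIV (\<lambda>x. h (frac x))"
proof -
  have "isCont (\<lambda>x. h (frac x)) x" for x
  proof -
    define n where "n = real_of_int \<lfloor>x\<rfloor>"
    have nx: "n \<le> x" "x < n + 1" unfolding n_def by linarith+
    have n: "n \<in> \<int>" unfolding n_def by simp
    have frac_eq: "h (frac y) = (if y \<le> n then h (y - (n - 1)) else h (y - n))"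
      if y: "y \<in> {n - 1..n + 1}" for y
    proof -
      consider "y < n" | "y = n" | "n < y" "y < n + 1" | "y = n + 1"
        using y by force
      then show ?thesis
      proof cases
        case 1
        then have "frac y = y - (n - 1)" unfolding frac_unique_iff using y n by auto
        then show ?thesis using 1 by auto
      next
        case 2
        then have "frac y = 0" unfolding frac_unique_iff using n by auto
        moreover have "y - (n - 1) = 1" "y \<le> n" using 2 by auto
        ultimately show ?thesis using h01 by metis
      next
        case 3
        then have "frac y = y - n" unfolding frac_unique_iff using n by auto
        then show ?thesis using 3 by auto
      next
        case 4
        then have "frac y = 0" unfolding frac_unique_iff using n by auto
        moreover have "y - n = 1" "\<not> y \<le> n" using 4 by auto
        ultimately show ?thesis using h01 by metis
      qed
    qed
    have "continuous_on {y \<in> {n - 1..n + 1}. y \<le> n} (\<lambda>y. h (y - (n - 1)))"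
      "continuous_on {y \<in> {n - 1..n + 1}. n \<le> y} (\<lambda>y. h (y - n))"
      by (auto intro!: continuous_on_compose2[OF h] continuous_intros)
    then have "continuous_on {n - 1..n + 1} (\<lambda>y. if y \<le> n then h (y - (n - 1)) else h (y - n))"
      by (rule continuous_on_cases_le) (auto intro!: continuous_intros simp: h01)
    then have "continuous_on {n - 1..n + 1} (\<lambda>y. h (frac y))"
      by (rule continuous_on_eq) (auto simp: frac_eq)
    moreover have "x \<in> interior {n - 1..n + 1}" using nx by auto
    ultimately show ?thesis by (rule continuous_on_interior)
  qed
  then show ?thesis by (simp add: continuous_at_imp_continuous_on)
qed

text \<open>The affine coordinate of \<open>s\<close> in its fundamental domain
  \<open>[1 - 2^-k, 1 - 2^-(k+1))\<close> or \<open>(-1 + 2^-(k+1), -1 + 2^-k]\<close> of \<^const>\<open>f01\<close>,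
  normalised to \<open>[0,1)\<close>.\<close>

definition fund_coord :: "real \<Rightarrow> real" where
  "fund_coord s = (if s \<le> 0 then 2 powr frac (log 2 (1 + s)) - 1
                   else 2 - 2 powr (1 - frac (- log 2 (1 - s))))"

lemma powr2_mem: "x \<in> {0..1} \<Longrightarrow> 2 powr x \<in> {1..2::real}"
  using powr_mono[of 0 x 2] powr_mono[of x 1 2] by auto

lemma fund_coord_mem: "fund_coord s \<in> {0..1}"
  using powr2_mem[of "frac (log 2 (1 + s))"] powr2_mem[of "1 - frac (- log 2 (1 - s))"]
  unfolding fund_coord_def by (auto simp: frac_lt_1 less_imp_le)

lemma fund_coord_0 [simp]: "fund_coord 0 = 0"
  unfolding fund_coord_def by simp

lemma fund_coord_f01:
  assumes "s \<in> {-1<..<1}" "0 < s \<or> s < -1/2"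
  shows "fund_coord (f01 s) = fund_coord s"
  using assms(2)
proof
  assume s: "0 < s"
  have "1 - f01 s = (1 - s) / 2" "0 < f01 s"
    using s by (auto simp: f01_upper field_simps)
  moreover have "- log 2 ((1 - s) / 2) = - log 2 (1 - s) + 1"
    using s assms(1) by (simp add: log_divide)
  ultimately have "frac (- log 2 (1 - f01 s)) = frac (- log 2 (1 - s))"
    by (simp only: frac_1_eq)
  then show ?thesis
    using s \<open>0 < f01 s\<close> by (simp add: fund_coord_def)
next
  assume s: "s < -1/2"
  have "1 + f01 s = 2 * (1 + s)" "f01 s \<le> 0"
    using s by (auto simp: f01_lower)
  moreover have "log 2 (2 * (1 + s)) = log 2 (1 + s) + 1"
    using assms(1) by (subst log_mult) auto
  ultimately have "frac (log 2 (1 + f01 s)) = frac (log 2 (1 + s))"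
    by (simp only: frac_1_eq)
  then show ?thesis
    using s \<open>f01 s \<le> 0\<close> by (simp add: fund_coord_def)
qed

lemma continuous_on_comp_fund_coord:
  fixes h :: "real \<Rightarrow> 'a::topological_space"
  assumes h: "continuous_on {0..1} h" and h01: "h 0 = h 1"
  shows "continuous_on {-1<..<1} (\<lambda>s. h (fund_coord s))"
proof -
  have "continuous_on {0..1} (\<lambda>x. h (2 powr x - 1))"
    "continuous_on {0..1} (\<lambda>x. h (2 - 2 powr (1 - x)))"
    using powr2_mem by (auto intro!: continuous_on_compose2[OF h] continuous_intros)
  then have lower: "continuous_on UNIV (\<lambda>x. h (2 powr frac x - 1))"
    and upper: "continuous_on UNIV (\<lambda>x. h (2 - 2 powr (1 - frac x)))"
    using h01 by (auto intro!: continuous_on_comp_frac)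
  have "continuous_on {s \<in> {-1<..<1}. s \<le> 0} (\<lambda>s. h (2 powr frac (log 2 (1 + s)) - 1))"
    by (rule continuous_on_compose2[OF lower, where f = "\<lambda>s. log 2 (1 + s)"])
      (auto intro!: continuous_intros)
  moreover have "continuous_on {s \<in> {-1<..<1}. 0 \<le> s}
      (\<lambda>s. h (2 - 2 powr (1 - frac (- log 2 (1 - s)))))"
    by (rule continuous_on_compose2[OF upper, where f = "\<lambda>s. - log 2 (1 - s)"])
      (auto intro!: continuous_intros)
  ultimately show ?thesis
    unfolding fund_coord_def if_distrib[where f = h]
    by (rule continuous_on_cases_le) (auto intro!: continuous_intros)
qed

definition tent :: "real \<Rightarrow> real" where
  "tent x = 1 - \<bar>2 * x - 1\<bar>"

lemma funpow_tent_mem: "x \<in> {0..1} \<Longrightarrow> (tent ^^ m) x \<in> {0..1}"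
  by (induction m) (auto simp: tent_def)

lemma funpow_tent_0 [simp]: "(tent ^^ m) 0 = 0"
  by (induction m) (auto simp: tent_def)

lemma funpow_Suc_tent_1 [simp]: "(tent ^^ Suc m) 1 = 0"
proof -
  have "tent 1 = 0" by (simp add: tent_def)
  moreover have "(tent ^^ Suc m) 1 = (tent ^^ m) (tent 1)"
    by (simp only: funpow_Suc_right o_def)
  ultimately show ?thesis by simp
qed

lemma continuous_on_funpow_tent: "continuous_on S (tent ^^ m)"
proof (induction m)
  case (Suc m)
  have "continuous_on UNIV tent" unfolding tent_def by (intro continuous_intros)
  with Suc show ?case
    by (auto intro: continuous_on_compose2[of UNIV tent])
qed simp

lemma continuous_on_tent_fund_coord:
  "continuous_on {-1<..<1} (\<lambda>s. (tent ^^ Suc m) (fund_coord s))"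
  by (rule continuous_on_comp_fund_coord[OF continuous_on_funpow_tent])
    (simp only: funpow_tent_0 funpow_Suc_tent_1)

definition ramp :: "nat \<Rightarrow> real \<Rightarrow> real" where
  "ramp m t = max 0 (min 1 (t - real m))"

lemma ramp_mem: "ramp m t \<in> {0..1}"
  unfolding ramp_def by auto

lemma continuous_on_ramp: "continuous_on S (ramp m)"
  unfolding ramp_def by (intro continuous_intros)

lemma sum_ramp: "(\<Sum>m<M. ramp m t) = max 0 (min t (real M))"
  by (induction M) (auto simp: ramp_def max_def min_def)

lemma sum_abs_ramp_diff_le: "(\<Sum>m<M. \<bar>ramp m t - ramp m t'\<bar>) \<le> \<bar>t - t'\<bar>"
proof -
  have *: "(\<Sum>m<M. \<bar>ramp m t - ramp m t'\<bar>) \<le> t' - t" if "t \<le> t'" for t t'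
  proof -
    have "(\<Sum>m<M. \<bar>ramp m t - ramp m t'\<bar>) = (\<Sum>m<M. ramp m t' - ramp m t)"
      using that by (intro sum.cong) (auto simp: ramp_def)
    also have "\<dots> = max 0 (min t' (real M)) - max 0 (min t (real M))"
      by (simp add: sum_subtractf sum_ramp)
    also have "\<dots> \<le> t' - t" using that by (auto simp: max_def min_def)
    finally show ?thesis .
  qed
  show ?thesis
    using *[of t t'] *[of t' t] by (cases "t \<le> t'") (auto simp: abs_minus_commute)
qed

definition blend_weight :: "nat \<Rightarrow> real \<Rightarrow> real" where
  "blend_weight m s = ramp m (slow_time s) * (tent ^^ Suc m) (fund_coord s)"

text \<open>Stage \<open>m + 1\<close> pulls the value towards \<open>B (m + 1) (slow_time s)\<close>, but only
  once \<open>slow_time s \<ge> m\<close> and only where \<open>fund_coord s\<close> has a nonzero tent iterate of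
  order \<open>m + 1\<close>; hence at every \<open>s\<close> only finitely many stages are active.\<close>

fun blend :: "(nat \<Rightarrow> real \<Rightarrow> real) \<Rightarrow> nat \<Rightarrow> real \<Rightarrow> real" where
  "blend B 0 s = 0"
| "blend B (Suc m) s =
     (1 - blend_weight m s) * blend B m s + blend_weight m s * B (Suc m) (slow_time s)"

lemma blend_weight_mem: "blend_weight m s \<in> {0..1}"
  using ramp_mem[of m "slow_time s"] funpow_tent_mem[OF fund_coord_mem, of "Suc m" s]
  unfolding blend_weight_def by (auto intro: mult_le_one)

lemma continuous_on_blend_weight: "continuous_on {-1<..<1} (blend_weight m)"
  unfolding blend_weight_def
  by (intro continuous_intros continuous_on_compose2[OF continuous_on_ramp continuous_on_slow_time]
      continuous_on_tent_fund_coord) auto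

lemma blend_at_0 [simp]: "blend B m 0 = 0"
  by (induction m) (simp_all add: blend_weight_def tent_def)

lemma blend_mem:
  assumes "\<And>j t. B j t \<in> {-1..1}"
  shows "blend B m s \<in> {-1..1}"
proof (induction m)
  case (Suc m)
  define w where "w = blend_weight m s"
  have w: "0 \<le> w" "0 \<le> 1 - w" using blend_weight_mem[of m s] unfolding w_def by auto
  have "(1 - w) * blend B m s + w * B (Suc m) (slow_time s) \<le> 1"
    "(1 - w) * (- blend B m s) + w * (- B (Suc m) (slow_time s)) \<le> 1"
    by (rule convex_bound_le; use Suc assms[of "Suc m" "slow_time s"] w in simp)+
  then show ?case unfolding blend.simps w_def[symmetric] by (simp only: mult_minus_right) auto
qed simp

lemma continuous_on_blend:
  assumes "\<And>j. continuous_on UNIV (B j)"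
  shows "continuous_on {-1<..<1} (blend B m)"
proof (induction m)
  case (Suc m)
  have "continuous_on {-1<..<1} (\<lambda>s. B (Suc m) (slow_time s))"
    by (rule continuous_on_compose2[OF assms continuous_on_slow_time]) auto
  with Suc show ?case
    unfolding blend.simps by (intro continuous_intros continuous_on_blend_weight)
qed simp

lemma blend_stable:
  assumes "slow_time s \<le> real m" "m \<le> M"
  shows "blend B M s = blend B m s"
  using assms(2)
proof (induction M rule: dec_induct)
  case (step M)
  then have "blend_weight M s = 0"
    using assms(1) unfolding blend_weight_def ramp_def by auto
  with step show ?case by simp
qed simp

lemma blend_at_level:
  assumes "j \<ge> 1" "(tent ^^ j) (fund_coord s) = 1" "\<And>i. i > j \<Longrightarrow> (tent ^^ i) (fund_coord s) = 0"
    and "real j \<le> slow_time s" "j \<le> M"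
  shows "blend B M s = B j (slow_time s)"
  using assms(5)
proof (induction M rule: dec_induct)
  case base
  from assms(1) obtain m where m: "j = Suc m" by (cases j) auto
  then have "blend_weight m s = 1"
    using assms(2,4) unfolding blend_weight_def ramp_def by auto
  then show ?case using m by simp
next
  case (step M)
  then have "blend_weight M s = 0"
    using assms(3)[of "Suc M"] unfolding blend_weight_def by simp
  with step show ?case by simp
qed

lemma blend_lipschitz:
  assumes B: "\<And>j t. B j t \<in> {-1..1}" and L: "\<And>j t t'. \<bar>B j t - B j t'\<bar> \<le> L * \<bar>t - t'\<bar>"
    and same_coord: "fund_coord s = fund_coord s'"
  shows "\<bar>blend B M s - blend B M s'\<bar> \<le> (L + 2) * \<bar>slow_time s - slow_time s'\<bar>"
proof -
  define \<theta> \<theta>' where "\<theta> = slow_time s" and "\<theta>' = slow_time s'"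
  have L0: "L \<ge> 0" using L[of 0 1 0] by (simp add: order.trans[OF abs_ge_zero])
  have "\<bar>blend B M s - blend B M s'\<bar> \<le> L * \<bar>\<theta> - \<theta>'\<bar> + 2 * (\<Sum>m<M. \<bar>ramp m \<theta> - ramp m \<theta>'\<bar>)"
  proof (induction M)
    case (Suc M)
    define Z where "Z = L * \<bar>\<theta> - \<theta>'\<bar> + 2 * (\<Sum>m<M. \<bar>ramp m \<theta> - ramp m \<theta>'\<bar>)"
    define d where "d = (tent ^^ Suc M) (fund_coord s)"
    define w w' where "w = ramp M \<theta> * d" and "w' = ramp M \<theta>' * d"
    define F G b b' where "F = blend B M s" and "G = blend B M s'"
      and "b = B (Suc M) \<theta>" and "b' = B (Suc M) \<theta>'"
    have w: "0 \<le> w" "w \<le> 1" "0 \<le> 1 - w"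
      using blend_weight_mem[of M s] unfolding w_def d_def \<theta>_def blend_weight_def by auto
    have d: "\<bar>d\<bar> \<le> 1"
      using funpow_tent_mem[OF fund_coord_mem, of "Suc M" s] unfolding d_def by (simp del: funpow.simps)
    have eq: "blend B (Suc M) s - blend B (Suc M) s' =
        (1 - w) * (F - G) + w * (b - b') + (ramp M \<theta>' - ramp M \<theta>) * d * (G - b')"
      unfolding blend.simps blend_weight_def w_def d_def F_def G_def b_def b'_def \<theta>_def \<theta>'_def
        same_coord by (simp add: algebra_simps)
    have "0 \<le> (\<Sum>m<M. \<bar>ramp m \<theta> - ramp m \<theta>'\<bar>)" by (intro sum_nonneg) auto
    then have "\<bar>b - b'\<bar> \<le> Z" unfolding b_def b'_def Z_def using L[of "Suc M" \<theta> \<theta>'] by linarith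
    moreover have "\<bar>F - G\<bar> \<le> Z" using Suc unfolding F_def G_def Z_def .
    ultimately have "(1 - w) * \<bar>F - G\<bar> + w * \<bar>b - b'\<bar> \<le> Z"
      using w by (intro convex_bound_le) auto
    then have "\<bar>(1 - w) * (F - G) + w * (b - b')\<bar> \<le> Z"
      using w abs_triangle_ineq[of "(1 - w) * (F - G)" "w * (b - b')"] by (simp add: abs_mult)
    moreover have "\<bar>(ramp M \<theta>' - ramp M \<theta>) * d * (G - b')\<bar> \<le> \<bar>ramp M \<theta> - ramp M \<theta>'\<bar> * 2"
    proof -
      have "\<bar>G - b'\<bar> \<le> 2" using blend_mem[of B, OF B, of M s'] B[of "Suc M" \<theta>'] unfolding G_def b'_def by auto
      then have "\<bar>d\<bar> * \<bar>G - b'\<bar> \<le> 1 * 2" using d by (intro mult_mono) auto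
      then have "\<bar>ramp M \<theta>' - ramp M \<theta>\<bar> * (\<bar>d\<bar> * \<bar>G - b'\<bar>) \<le> \<bar>ramp M \<theta>' - ramp M \<theta>\<bar> * 2"
        by (intro mult_left_mono) auto
      then show ?thesis by (simp add: abs_mult abs_minus_commute mult.assoc)
    qed
    ultimately show ?case unfolding eq Z_def by (simp add: algebra_simps)
  qed (use L0 in simp)
  also have "\<dots> \<le> L * \<bar>\<theta> - \<theta>'\<bar> + 2 * \<bar>\<theta> - \<theta>'\<bar>"
    using sum_abs_ramp_diff_le[where M = M and t = \<theta> and t' = \<theta>'] by simp
  finally show ?thesis unfolding \<theta>_def \<theta>'_def by (simp add: algebra_simps)
qed

definition subseq_limits :: "(nat \<Rightarrow> 'a::topological_space) \<Rightarrow> 'a set" where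
  "subseq_limits X = {y. \<exists>n. strict_mono n \<and> (\<forall>i. 0 < n i) \<and> (\<lambda>i. X (n i)) \<longlonglongrightarrow> y}"

lemma omega_limit_eq_subseq_limits: "omega_limit g x = subseq_limits (\<lambda>k. (g ^^ k) x)"
  unfolding omega_limit_def subseq_limits_def ..

lemma subseq_limits_iff:
  fixes X :: "nat \<Rightarrow> 'a::metric_space"
  shows "y \<in> subseq_limits X \<longleftrightarrow> (\<forall>\<epsilon>>0. \<exists>\<^sub>F k in sequentially. dist (X k) y < \<epsilon>)"
proof
  assume "y \<in> subseq_limits X"
  then obtain n where n: "strict_mono n" "(\<lambda>i. X (n i)) \<longlonglongrightarrow> y"
    unfolding subseq_limits_def by blast
  show "\<forall>\<epsilon>>0. \<exists>\<^sub>F k in sequentially. dist (X k) y < \<epsilon>"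
  proof (intro allI impI)
    fix \<epsilon> :: real assume "\<epsilon> > 0"
    then obtain I where I: "\<And>i. i \<ge> I \<Longrightarrow> dist (X (n i)) y < \<epsilon>"
      using n(2) unfolding lim_sequentially by blast
    show "\<exists>\<^sub>F k in sequentially. dist (X k) y < \<epsilon>"
      unfolding frequently_sequentially
    proof
      fix N
      have "N \<le> n (max I N)"
        using seq_suble[OF n(1), of "max I N"] by simp
      moreover have "dist (X (n (max I N))) y < \<epsilon>"
        by (rule I) simp
      ultimately show "\<exists>k\<ge>N. dist (X k) y < \<epsilon>" by blast
    qed
  qed
next
  assume near: "\<forall>\<epsilon>>0. \<exists>\<^sub>F k in sequentially. dist (X k) y < \<epsilon>"
  have "\<exists>k\<ge>M. dist (X k) y < inverse (real (Suc i))" for M i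
  proof -
    have "\<exists>\<^sub>F k in sequentially. dist (X k) y < inverse (real (Suc i))"
      using near by simp
    then show ?thesis unfolding frequently_sequentially by blast
  qed
  then obtain pick where pick: "\<And>M i. pick M i \<ge> M" "\<And>M i. dist (X (pick M i)) y < inverse (real (Suc i))"
    by metis
  define n where "n = rec_nat (pick 1 0) (\<lambda>i ni. pick (Suc ni) (Suc i))"
  have n0: "n 0 = pick 1 0" and nS: "\<And>i. n (Suc i) = pick (Suc (n i)) (Suc i)"
    unfolding n_def by simp_all
  have "strict_mono n"
    unfolding strict_mono_Suc_iff using nS pick(1) by (metis Suc_le_lessD)
  moreover have "0 < n i" for i
    using n0 nS pick(1) by (cases i) (auto intro: less_le_trans[OF zero_less_Suc])
  moreover have close: "dist (X (n i)) y < inverse (real (Suc i))" for i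
  proof (cases i)
    case 0
    then show ?thesis using n0 pick(2)[of 1 0] by simp
  next
    case (Suc j)
    then show ?thesis using nS[of j] pick(2)[of "Suc (n j)" "Suc j"] by simp
  qed
  have "(\<lambda>i. dist (X (n i)) y) \<longlonglongrightarrow> 0"
  proof (rule Lim_null_comparison[OF _ LIMSEQ_inverse_real_of_nat])
    show "\<forall>\<^sub>F i in sequentially. norm (dist (X (n i)) y) \<le> inverse (real (Suc i))"
      using order.strict_implies_order[OF close] by (intro always_eventually allI) simp
  qed
  then have "(\<lambda>i. X (n i)) \<longlonglongrightarrow> y"
    by (rule tendsto_dist_iff[THEN iffD2])
  ultimately show "y \<in> subseq_limits X"
    unfolding subseq_limits_def by blast
qed

lemma subseq_limits_dist_tendsto_0:
  fixes X Y :: "nat \<Rightarrow> 'a::metric_space"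
  assumes "(\<lambda>k. dist (X k) (Y k)) \<longlonglongrightarrow> 0"
  shows "subseq_limits X = subseq_limits Y"
proof -
  have sub: "subseq_limits X \<subseteq> subseq_limits Y"
    if "(\<lambda>k. dist (X k) (Y k)) \<longlonglongrightarrow> 0" for X Y :: "nat \<Rightarrow> 'a"
  proof
    fix y assume "y \<in> subseq_limits X"
    show "y \<in> subseq_limits Y"
      unfolding subseq_limits_iff
    proof (intro allI impI)
      fix \<epsilon> :: real assume "\<epsilon> > 0"
      then have "\<epsilon> / 2 > 0" by simp
      then have "\<exists>\<^sub>F k in sequentially. dist (X k) y < \<epsilon> / 2"
        using \<open>y \<in> subseq_limits X\<close> unfolding subseq_limits_iff by blast
      moreover have "\<forall>\<^sub>F k in sequentially. dist (X k) (Y k) < \<epsilon> / 2"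
        using that \<open>\<epsilon> > 0\<close> by (auto dest: order_tendstoD(2)[of _ 0 _ "\<epsilon> / 2"])
      ultimately have "\<exists>\<^sub>F k in sequentially. dist (X k) (Y k) < \<epsilon> / 2 \<and> dist (X k) y < \<epsilon> / 2"
        by (rule frequently_eventually_conj)
      then show "\<exists>\<^sub>F k in sequentially. dist (Y k) y < \<epsilon>"
      proof (rule frequently_elim1)
        fix k assume "dist (X k) (Y k) < \<epsilon> / 2 \<and> dist (X k) y < \<epsilon> / 2"
        moreover have "dist (Y k) y \<le> dist (X k) (Y k) + dist (X k) y"
          using dist_triangle[of "Y k" y "X k"] dist_commute[of "Y k" "X k"] by simp
        ultimately show "dist (Y k) y < \<epsilon>" by linarith
      qed
    qed
  qed
  show ?thesis
    using sub[OF assms] sub[of Y X] assms by (auto simp: dist_commute)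
qed

lemma subseq_limits_Pair_const:
  fixes C :: "nat \<Rightarrow> 'a::metric_space" and e :: "'b::metric_space"
  shows "subseq_limits (\<lambda>k. (C k, e)) = subseq_limits C \<times> {e}"
proof safe
  fix y z assume yz: "(y, z) \<in> subseq_limits (\<lambda>k. (C k, e))"
  show "y \<in> subseq_limits C"
    unfolding subseq_limits_iff
  proof (intro allI impI)
    fix \<epsilon> :: real assume "\<epsilon> > 0"
    with yz have "\<exists>\<^sub>F k in sequentially. dist (C k, e) (y, z) < \<epsilon>"
      unfolding subseq_limits_iff by blast
    then show "\<exists>\<^sub>F k in sequentially. dist (C k) y < \<epsilon>"
      by (rule frequently_elim1) (metis dist_fst_le fst_conv le_less_trans)
  qed
  show "z = e"
  proof (rule ccontr)
    assume "z \<noteq> e"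
    then have "\<exists>\<^sub>F k in sequentially. dist (C k, e) (y, z) < dist e z"
      using yz unfolding subseq_limits_iff by simp
    then obtain k where "dist (C k, e) (y, z) < dist e z"
      using frequently_ex by blast
    with dist_snd_le[of "(C k, e)" "(y, z)"] show False by simp
  qed
next
  fix y assume "y \<in> subseq_limits C"
  then show "(y, e) \<in> subseq_limits (\<lambda>k. (C k, e))"
    unfolding subseq_limits_iff by (simp add: dist_Pair_Pair)
qed

lemma subseq_limits_eq_closed:
  fixes C :: "nat \<Rightarrow> 'a::metric_space"
  assumes "closed A" "\<And>k. C k \<in> A"
    and "\<And>y \<epsilon>. y \<in> A \<Longrightarrow> \<epsilon> > 0 \<Longrightarrow> \<exists>\<^sub>F k in sequentially. dist (C k) y < \<epsilon>"
  shows "subseq_limits C = A"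
proof
  show "subseq_limits C \<subseteq> A"
  proof
    fix y assume y: "y \<in> subseq_limits C"
    have "\<exists>x\<in>A. dist x y < \<epsilon>" if "\<epsilon> > 0" for \<epsilon>
    proof -
      have "\<exists>\<^sub>F k in sequentially. dist (C k) y < \<epsilon>"
        using y that unfolding subseq_limits_iff by blast
      then obtain k where "dist (C k) y < \<epsilon>"
        using frequently_ex by blast
      then show ?thesis using assms(2) by blast
    qed
    then show "y \<in> A"
      using closed_approachable[OF assms(1), of y] by simp
  qed
  show "A \<subseteq> subseq_limits C"
    using assms(3) by (auto simp: subseq_limits_iff)
qed

definition cos_wave :: "real \<Rightarrow> real" where
  "cos_wave t = (1 - cos (pi * t)) / 2"

definition oscillate :: "real \<Rightarrow> real \<Rightarrow> real \<Rightarrow> real" where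
  "oscillate a b t = a + (b - a) * cos_wave t"

lemma cos_wave_mem: "cos_wave t \<in> {0..1}"
  unfolding cos_wave_def by auto

lemma abs_cos_diff_le: "\<bar>cos x - cos y\<bar> \<le> \<bar>x - y\<bar>" for x y :: real
proof -
  have "\<bar>cos x - cos y\<bar> = 2 * \<bar>sin ((x + y) / 2)\<bar> * \<bar>sin ((y - x) / 2)\<bar>"
    unfolding cos_diff_cos by (simp add: abs_mult)
  also have "\<dots> \<le> 2 * 1 * \<bar>(y - x) / 2\<bar>"
    by (intro mult_mono abs_sin_x_le_abs_x) auto
  finally show ?thesis by (simp add: abs_minus_commute)
qed

lemma cos_wave_lipschitz: "\<bar>cos_wave t - cos_wave t'\<bar> \<le> 2 * \<bar>t - t'\<bar>"
proof -
  have "cos_wave t - cos_wave t' = (cos (pi * t') - cos (pi * t)) / 2"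
    unfolding cos_wave_def by (simp add: field_simps)
  then have "\<bar>cos_wave t - cos_wave t'\<bar> = \<bar>cos (pi * t') - cos (pi * t)\<bar> / 2"
    by (simp only: abs_divide)
  also have "\<dots> \<le> pi * \<bar>t - t'\<bar> / 2"
    using abs_cos_diff_le[of "pi * t'" "pi * t"]
    by (simp add: abs_mult abs_minus_commute right_diff_distrib[symmetric])
  also have "\<dots> \<le> 2 * \<bar>t - t'\<bar>"
    using pi_less_4 by (simp add: mult_right_mono)
  finally show ?thesis .
qed

lemma cos_wave_periodic: "cos_wave (t + 2 * real m) = cos_wave t"
proof -
  have "cos (pi * t + 2 * pi * real m) = cos (pi * t)"
  proof (induction m)
    case (Suc m)
    have "pi * t + 2 * pi * real (Suc m) = (pi * t + 2 * pi * real m) + 2 * pi"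
      by (simp add: algebra_simps)
    then show ?case by (simp only: cos_periodic Suc.IH)
  qed simp
  then show ?thesis unfolding cos_wave_def by (simp add: algebra_simps)
qed

text \<open>Consecutive values of \<open>sqrt (k + c)\<close> differ by less than \<open>1 / sqrt (k + c)\<close>,
  so the phase comes arbitrarily close to every point modulo the period 2.\<close>

lemma cos_wave_sqrt_frequently_near:
  assumes z: "z \<in> {0..1}" and \<epsilon>: "\<epsilon> > 0"
  shows "\<exists>\<^sub>F k in sequentially. \<bar>cos_wave (sqrt (real k + c)) - z\<bar> < \<epsilon>"
  unfolding frequently_sequentially
proof
  fix M
  define \<phi> where "\<phi> = arccos (1 - 2 * z) / pi"
  have "cos_wave \<phi> = z" "\<phi> \<ge> 0"
    unfolding cos_wave_def \<phi>_def using z arccos_lbound[of "1 - 2 * z"] by auto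
  define X where "X = max (max 1 (real M + \<bar>c\<bar>)) (4 / \<epsilon>)"
  define x where "x = \<phi> + 2 * real (nat \<lceil>X\<rceil>)"
  have xX: "x \<ge> X" unfolding x_def using \<open>\<phi> \<ge> 0\<close> by linarith
  then have x1: "x \<ge> 1" "x\<^sup>2 \<ge> real M + \<bar>c\<bar>"
    unfolding X_def using order.trans[of _ x "x\<^sup>2"] by (auto simp: power2_eq_square)
  define k where "k = nat \<lceil>x\<^sup>2 - c\<rceil>"
  have k: "real k \<ge> x\<^sup>2 - c" "real k < x\<^sup>2 - c + 1" "k \<ge> M"
    unfolding k_def using x1 by linarith+
  define y where "y = sqrt (real k + c)"
  have y: "y \<ge> x" "y\<^sup>2 = real k + c"
    unfolding y_def using k x1 by (auto intro: real_le_rsqrt)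
  have "(y - x) * x \<le> (y - x) * (y + x)"
    using y x1 by (intro mult_left_mono) auto
  also have "\<dots> < 1"
    using y k by (simp add: algebra_simps power2_eq_square)
  finally have "y - x < 1 / x" using x1 by (simp add: field_simps)
  also have "\<dots> \<le> \<epsilon> / 4"
    using xX \<epsilon> unfolding X_def by (simp add: field_simps)
  finally have "2 * \<bar>y - x\<bar> < \<epsilon>" using y by simp
  moreover have "\<bar>cos_wave y - z\<bar> \<le> 2 * \<bar>y - x\<bar>"
    using cos_wave_lipschitz[of y x] \<open>cos_wave \<phi> = z\<close> unfolding x_def cos_wave_periodic by simp
  ultimately show "\<exists>k\<ge>M. \<bar>cos_wave (sqrt (real k + c)) - z\<bar> < \<epsilon>"
    using k(3) unfolding y_def by (intro exI[of _ k]) auto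
qed

lemma oscillate_mem: "a \<le> b \<Longrightarrow> oscillate a b t \<in> {a..b}"
  using cos_wave_mem[of t] mult_left_mono[of "cos_wave t" 1 "b - a"]
  unfolding oscillate_def by auto

lemma continuous_on_oscillate: "continuous_on S (oscillate a b)"
  unfolding oscillate_def cos_wave_def by (intro continuous_intros) auto

lemma oscillate_lipschitz:
  assumes "-1 \<le> a" "a \<le> b" "b \<le> 1"
  shows "\<bar>oscillate a b t - oscillate a b t'\<bar> \<le> 4 * \<bar>t - t'\<bar>"
proof -
  have "\<bar>oscillate a b t - oscillate a b t'\<bar> = (b - a) * \<bar>cos_wave t - cos_wave t'\<bar>"
    using assms unfolding oscillate_def by (simp add: abs_mult right_diff_distrib[symmetric])
  also have "\<dots> \<le> 2 * (2 * \<bar>t - t'\<bar>)"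
    using assms cos_wave_lipschitz[of t t'] by (intro mult_mono) auto
  finally show ?thesis by simp
qed

lemma subseq_limits_oscillate_sqrt:
  assumes "a \<le> b"
  shows "subseq_limits (\<lambda>k. oscillate a b (sqrt (real k + c))) = {a..b}"
proof (rule subseq_limits_eq_closed)
  show "oscillate a b (sqrt (real k + c)) \<in> {a..b}" for k
    by (rule oscillate_mem[OF assms])
  fix y \<epsilon> :: real assume y: "y \<in> {a..b}" and \<epsilon>: "\<epsilon> > 0"
  show "\<exists>\<^sub>F k in sequentially. dist (oscillate a b (sqrt (real k + c))) y < \<epsilon>"
  proof (cases "a = b")
    case True
    then show ?thesis using y \<epsilon> by (simp add: oscillate_def)
  next
    case False
    then have ba: "b - a > 0" using assms by simp
    have "(y - a) / (b - a) \<in> {0..1}" using y ba by (auto simp: field_simps)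
    then have "\<exists>\<^sub>F k in sequentially. \<bar>cos_wave (sqrt (real k + c)) - (y - a) / (b - a)\<bar> < \<epsilon> / (b - a)"
      using \<epsilon> ba by (intro cos_wave_sqrt_frequently_near) auto
    then show ?thesis
    proof (rule frequently_elim1)
      fix k
      assume "\<bar>cos_wave (sqrt (real k + c)) - (y - a) / (b - a)\<bar> < \<epsilon> / (b - a)"
      then have "(b - a) * \<bar>cos_wave (sqrt (real k + c)) - (y - a) / (b - a)\<bar> < \<epsilon>"
        using ba by (simp add: field_simps)
      moreover have "oscillate a b (sqrt (real k + c)) - y
          = (b - a) * (cos_wave (sqrt (real k + c)) - (y - a) / (b - a))"
        unfolding oscillate_def using ba by (simp add: field_simps)
      ultimately show "dist (oscillate a b (sqrt (real k + c))) y < \<epsilon>"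
        using ba by (simp add: dist_real_def abs_mult)
    qed
  qed
qed simp

text \<open>The bi-infinite \<^const>\<open>f01\<close>-orbit of fundamental coordinate \<open>v\<close>: the points
  with \<open>z \<ge> 0\<close> lie in \<open>(0,1)\<close>, those with \<open>z < 0\<close> in \<open>(-1,0)\<close>.\<close>

definition orbit_point :: "real \<Rightarrow> int \<Rightarrow> real" where
  "orbit_point v z = (if 0 \<le> z then 1 - (2 - v) / 2 ^ (nat z + 1) else -1 + (1 + v) / 2 ^ nat (- z))"

lemma orbit_point_nonneg: "0 \<le> z \<Longrightarrow> orbit_point v z = 1 - (2 - v) / 2 ^ (nat z + 1)"
  and orbit_point_neg: "z < 0 \<Longrightarrow> orbit_point v z = -1 + (1 + v) / 2 ^ nat (- z)"
  unfolding orbit_point_def by simp_all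

lemma orbit_point_sign:
  assumes "v \<in> {0<..<1}"
  shows "0 < orbit_point v z \<longleftrightarrow> 0 \<le> z"
proof (cases "0 \<le> z")
  case True
  have "(2::real) ^ (nat z + 1) = 2 * 2 ^ nat z" "(1::real) \<le> 2 ^ nat z"
    by simp_all
  moreover have "0 < v" using assms by simp
  ultimately have "2 - v < 2 ^ (nat z + 1)"
    by linarith
  then have "(2 - v) / 2 ^ (nat z + 1) < 1"
    by (simp add: field_simps)
  then show ?thesis using True by (simp add: orbit_point_nonneg)
next
  case False
  then have "(2::real) \<le> 2 ^ nat (- z)"
    by (simp add: self_le_power)
  then have "1 + v < 2 ^ nat (- z)"
    using assms by auto
  then have "(1 + v) / 2 ^ nat (- z) < 1"
    by (simp add: field_simps)
  then show ?thesis using False by (simp add: orbit_point_neg)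
qed

lemma orbit_point_mem_open:
  assumes "v \<in> {0..1}"
  shows "orbit_point v z \<in> {-1<..<1}"
proof (cases "0 \<le> z")
  case True
  have "(2::real) ^ (nat z + 1) = 2 * 2 ^ nat z" "(1::real) \<le> 2 ^ nat z"
    by simp_all
  moreover have "0 \<le> v" using assms by simp
  ultimately have "2 - v \<le> 2 ^ (nat z + 1)"
    by linarith
  then have "0 < (2 - v) / 2 ^ (nat z + 1)" "(2 - v) / 2 ^ (nat z + 1) \<le> 1"
    using assms by (simp_all add: field_simps)
  then have "-1 < orbit_point v z" "orbit_point v z < 1"
    unfolding orbit_point_nonneg[OF True] by linarith+
  then show ?thesis by simp
next
  case False
  then have "(2::real) \<le> 2 ^ nat (- z)"
    by (simp add: self_le_power)
  then have "1 + v \<le> 2 ^ nat (- z)"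
    using assms by auto
  then have "0 < (1 + v) / 2 ^ nat (- z)" "(1 + v) / 2 ^ nat (- z) \<le> 1"
    using assms by (simp_all add: field_simps)
  then have "-1 < orbit_point v z" "orbit_point v z < 1"
    using False unfolding orbit_point_neg[OF not_le_imp_less[OF False]] by linarith+
  then show ?thesis by simp
qed

lemma f01_orbit_point:
  assumes "v \<in> {0<..<1}"
  shows "f01 (orbit_point v z) = orbit_point v (z + 1)"
proof -
  consider "0 \<le> z" | "z = -1" | "z \<le> -2" by linarith
  then show ?thesis
  proof cases
    case 1
    then have "nat (z + 1) = Suc (nat z)" by simp
    then show ?thesis
      using 1 orbit_point_sign[OF assms, of z]
      by (simp add: f01_upper orbit_point_nonneg field_simps)
  next
    case 2
    then show ?thesis using assms by (simp add: orbit_point_def f01_middle field_simps)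
  next
    case 3
    define m where "m = nat (- (z + 1))"
    have m: "nat (- z) = Suc m" "1 \<le> m" unfolding m_def using 3 by simp_all
    then have "(2::real) \<le> 2 ^ m" by (simp add: self_le_power)
    then have "(1 + v) / 2 ^ Suc m < 1 / 2"
      using assms by (simp add: field_simps)
    moreover have "orbit_point v z = -1 + (1 + v) / 2 ^ Suc m"
      using 3 m(1) by (simp add: orbit_point_neg)
    ultimately have "orbit_point v z < -1/2"
      by linarith
    then show ?thesis
      using 3 m by (simp add: f01_lower orbit_point_neg m_def field_simps)
  qed
qed

lemma f01_inv_orbit_point:
  assumes "v \<in> {0<..<1}"
  shows "f01_inv (orbit_point v z) = orbit_point v (z - 1)"
  using f01_orbit_point[OF assms, of "z - 1"] f01_inv_f01 by (metis diff_add_cancel)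

lemma funpow_f01_orbit_point:
  "v \<in> {0<..<1} \<Longrightarrow> (f01 ^^ k) (orbit_point v z) = orbit_point v (z + int k)"
  by (induction k) (simp_all add: f01_orbit_point ac_simps)

lemma funpow_f01_inv_orbit_point:
  "v \<in> {0<..<1} \<Longrightarrow> (f01_inv ^^ k) (orbit_point v z) = orbit_point v (z - int k)"
  by (induction k) (simp_all add: f01_inv_orbit_point algebra_simps)

lemma log2_two_mult_power [simp]: "log 2 (2 * 2 ^ n) = real n + 1"
  by (simp add: log_mult log_nat_power)

lemma fund_coord_orbit_point:
  assumes v: "v \<in> {0<..<1}"
  shows "fund_coord (orbit_point v z) = v"
proof (cases "0 \<le> z")
  case True
  have l: "0 < log 2 (2 - v)" "log 2 (2 - v) < 1"
    using v by auto
  have "- log 2 (1 - orbit_point v z) = real (nat z + 1) - log 2 (2 - v)"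
    using True v by (simp add: orbit_point_nonneg log_divide)
  moreover have "frac (real (nat z + 1) - log 2 (2 - v)) = 1 - log 2 (2 - v)"
    unfolding frac_unique_iff using l by (auto simp: Ints_diff)
  ultimately show ?thesis
    using True v orbit_point_sign[OF v, of z] by (simp add: fund_coord_def)
next
  case False
  have l: "0 < log 2 (1 + v)" "log 2 (1 + v) < 1"
    using v by auto
  have "log 2 (1 + orbit_point v z) = log 2 (1 + v) - real (nat (- z))"
    using False v by (simp add: orbit_point_neg log_divide log_nat_power)
  moreover have "frac (log 2 (1 + v) - real (nat (- z))) = log 2 (1 + v)"
    unfolding frac_unique_iff using l by (auto simp: Ints_diff)
  ultimately show ?thesis
    using False v orbit_point_sign[OF v, of z] by (simp add: fund_coord_def)
qed

lemma depth_orbit_point_nonneg: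
  assumes "v \<in> {0<..<1}" "0 \<le> z"
  shows "depth (orbit_point v z) = real_of_int z + 1 - log 2 (2 - v)"
proof -
  have "1 - orbit_point v z = (2 - v) / 2 ^ (nat z + 1)"
    using assms by (simp add: orbit_point_nonneg)
  then show ?thesis
    using assms orbit_point_sign[OF assms(1), of z] orbit_point_mem_open[of v z]
    by (simp add: depth_upper log_divide)
qed

lemma depth_orbit_point_neg:
  assumes "v \<in> {0<..<1}" "z \<le> -2"
  shows "depth (orbit_point v z) = - real_of_int z - 1 - log 2 (1 + v)"
proof -
  have "1 + orbit_point v z = (1 + v) / 2 ^ nat (- z)"
    using assms by (simp add: orbit_point_neg)
  then have "- log 2 (1 + orbit_point v z) - 1 = - real_of_int z - 1 - log 2 (1 + v)"
    using assms by (simp add: log_divide log_nat_power)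
  moreover have "log 2 (1 + v) < 1" using assms by simp
  moreover have "depth (orbit_point v z) = max 0 (- log 2 (1 + orbit_point v z) - 1)"
    using assms orbit_point_sign[OF assms(1), of z] orbit_point_mem_open[of v z]
    by (intro depth_lower) auto
  ultimately show ?thesis
    using assms(2) by (simp only: max_absorb2)
qed

lemma orbit_point_tendsto_1: "(\<lambda>k. orbit_point v (z + int k)) \<longlonglongrightarrow> 1"
proof (rule LIMSEQ_offset[where k = "nat (- z)"])
  define C where "C = (2 - v) / 2 ^ (nat (z + int (nat (- z))) + 1)"
  have "orbit_point v (z + int (k + nat (- z))) = 1 - C * (1/2) ^ k" for k
  proof -
    have "nat (z + int (k + nat (- z))) = nat (z + int (nat (- z))) + k" by arith
    then show ?thesis unfolding C_def
      by (simp add: orbit_point_nonneg power_add power_one_over field_simps)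
  qed
  moreover have "(\<lambda>k. 1 - C * (1/2::real) ^ k) \<longlonglongrightarrow> 1 - C * 0"
    by (intro tendsto_intros LIMSEQ_realpow_zero) auto
  ultimately show "(\<lambda>k. orbit_point v (z + int (k + nat (- z)))) \<longlonglongrightarrow> 1"
    by (simp only: mult_zero_right diff_zero)
qed

lemma orbit_point_tendsto_neg1: "(\<lambda>k. orbit_point v (z - int k)) \<longlonglongrightarrow> -1"
proof (rule LIMSEQ_offset[where k = "nat (z + 1)"])
  define C where "C = (1 + v) / 2 ^ nat (- (z - int (nat (z + 1))))"
  have "orbit_point v (z - int (k + nat (z + 1))) = -1 + C * (1/2) ^ k" for k
  proof -
    have "nat (- (z - int (k + nat (z + 1)))) = nat (- (z - int (nat (z + 1)))) + k" by arith
    then show ?thesis unfolding C_def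
      by (simp add: orbit_point_neg power_add power_one_over field_simps)
  qed
  moreover have "(\<lambda>k. -1 + C * (1/2::real) ^ k) \<longlonglongrightarrow> -1 + C * 0"
    by (intro tendsto_intros LIMSEQ_realpow_zero) auto
  ultimately show "(\<lambda>k. orbit_point v (z - int (k + nat (z + 1)))) \<longlonglongrightarrow> -1"
    by (simp only: mult_zero_right add_0_right)
qed

lemma orbit_point_dist_le: "\<bar>orbit_point v z - orbit_point w z\<bar> \<le> \<bar>v - w\<bar>"
proof -
  define e where "e = (if 0 \<le> z then nat z + 1 else nat (- z))"
  have "orbit_point v z - orbit_point w z = (v - w) / 2 ^ e"
    unfolding orbit_point_def e_def by (simp add: field_simps)
  then have "\<bar>orbit_point v z - orbit_point w z\<bar> = \<bar>v - w\<bar> / 2 ^ e"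
    by simp
  also have "\<dots> \<le> \<bar>v - w\<bar> / 1"
    by (intro divide_left_mono) auto
  finally show ?thesis by simp
qed

lemma exists_dyadic_scale:
  fixes y :: real
  assumes "0 < y" "y \<le> 1"
  shows "\<exists>k::nat. 1 / 2 ^ (k + 1) \<le> y \<and> y \<le> 1 / 2 ^ k"
proof -
  define P where "P k \<longleftrightarrow> 1 / 2 ^ (k + 1) \<le> y" for k :: nat
  obtain n where "(1/2::real) ^ n < y" using real_arch_pow_inv[OF assms(1), of "1/2"] by auto
  moreover have "1 / 2 ^ (n + 1) \<le> (1/2::real) ^ n"
    unfolding power_one_over by (intro divide_left_mono) auto
  ultimately have "P n"
    unfolding P_def by linarith
  define k where "k = (LEAST k. P k)"
  have "P k" unfolding k_def by (rule LeastI) fact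
  moreover have "y \<le> 1 / 2 ^ k"
  proof (cases k)
    case (Suc j)
    then have "j < (LEAST k. P k)" unfolding k_def by simp
    then have "\<not> P j" by (rule not_less_Least)
    then show ?thesis using Suc unfolding P_def by simp
  qed (use assms in simp)
  ultimately show ?thesis unfolding P_def by blast
qed

lemma orbit_point_surj:
  assumes "x \<in> {-1<..<1}"
  shows "\<exists>w\<in>{0..1}. \<exists>z. orbit_point w z = x"
proof (cases "0 \<le> x")
  case True
  then obtain k where k: "1 / 2 ^ (k + 1) \<le> 1 - x" "1 - x \<le> 1 / 2 ^ k"
    using exists_dyadic_scale[of "1 - x"] assms by auto
  define w where "w = 2 - 2 ^ (k + 1) * (1 - x)"
  have "w \<in> {0..1}" unfolding w_def using k by (auto simp: field_simps)
  moreover have "orbit_point w (int k) = x" unfolding w_def by (simp add: orbit_point_nonneg)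
  ultimately show ?thesis by blast
next
  case False
  then obtain k where k: "1 / 2 ^ (k + 1) \<le> 1 + x" "1 + x \<le> 1 / 2 ^ k"
    using exists_dyadic_scale[of "1 + x"] assms by auto
  define w where "w = 2 ^ (k + 1) * (1 + x) - 1"
  have "w \<in> {0..1}" unfolding w_def using k by (auto simp: field_simps)
  moreover have "orbit_point w (- int (k + 1)) = x"
  proof -
    have "nat (int k + 1) = Suc k" by simp
    then show ?thesis unfolding w_def by (simp add: orbit_point_neg)
  qed
  ultimately show ?thesis by blast
qed

lemma funpow_tent_odd_dyadic:
  "1 \<le> j \<Longrightarrow> odd m \<Longrightarrow> m < 2 ^ j \<Longrightarrow> (tent ^^ j) (real m / 2 ^ j) = 1"
proof (induction j arbitrary: m rule: nat_induct_at_least)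
  case base
  then have "m < 2" by simp
  with base(1) have "m = 1" by (cases m) auto
  then show ?case by (simp add: tent_def)
next
  case (Suc j)
  have step: "(tent ^^ Suc j) (real m / 2 ^ Suc j) = (tent ^^ j) (tent (real m / 2 ^ Suc j))"
    by (simp only: funpow_Suc_right o_def)
  show ?case
  proof (cases "m < 2 ^ j")
    case True
    then have "real m < 2 ^ j" by simp
    then have "2 * (real m / 2 ^ Suc j) - 1 \<le> 0" by (simp add: divide_simps)
    then have "tent (real m / 2 ^ Suc j) = real m / 2 ^ j" unfolding tent_def by simp
    then show ?thesis using step Suc.IH[OF Suc.prems(1) True] by simp
  next
    case False
    moreover have "even ((2::nat) ^ j)" using Suc.hyps by simp
    then have "m \<noteq> 2 ^ j" using Suc.prems(1) by auto
    ultimately have gt: "2 ^ j < m" by simp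
    define m' where "m' = 2 ^ Suc j - m"
    obtain q where q: "m = 2 * q + 1" using Suc.prems(1) oddE by blast
    have odd': "odd m'" unfolding m'_def using Suc.prems(2) q by (simp; presburger)
    have lt': "m' < 2 ^ j" unfolding m'_def using gt zero_less_power[of "2::nat" j] by (simp; arith)
    have "2 ^ j < real m" using gt by simp
    then have "2 * (real m / 2 ^ Suc j) - 1 \<ge> 0" by (simp add: divide_simps)
    then have "tent (real m / 2 ^ Suc j) = 2 - real m / 2 ^ j" unfolding tent_def by (simp add: field_simps)
    also have "\<dots> = real m' / 2 ^ j"
    proof -
      have "real m' = 2 ^ Suc j - real m" unfolding m'_def using Suc.prems(2) by (simp add: of_nat_diff)
      then show ?thesis by (simp add: field_simps)
    qed
    finally show ?thesis using step Suc.IH[OF odd' lt'] by simp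
  qed
qed

lemma funpow_tent_beyond_odd_dyadic:
  assumes "1 \<le> j" "odd m" "m < 2 ^ j" "j < i"
  shows "(tent ^^ i) (real m / 2 ^ j) = 0"
proof -
  define d where "d = i - j - 1"
  have i: "i = Suc d + j" unfolding d_def using assms(4) by simp
  have "(tent ^^ i) (real m / 2 ^ j) = (tent ^^ Suc d) ((tent ^^ j) (real m / 2 ^ j))"
    unfolding i by (simp only: funpow_add o_def)
  also have "\<dots> = (tent ^^ Suc d) 1"
    by (simp only: funpow_tent_odd_dyadic[OF assms(1-3)])
  also have "\<dots> = 0"
    by (rule funpow_Suc_tent_1)
  finally show ?thesis .
qed

text \<open>Every \<open>n\<close> is the label of infinitely many levels \<open>j\<close>, so each set of labelled
  dyadics is dense in \<open>[0,1]\<close>; the level of an odd dyadic is recovered from its tent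
  iterates, which makes the sets pairwise disjoint.\<close>

definition label :: "nat \<Rightarrow> nat" where
  "label j = fst (prod_decode (j - 1))"

definition labelled_dyadics :: "nat \<Rightarrow> real set" where
  "labelled_dyadics n = {real m / 2 ^ j | m j. 1 \<le> j \<and> label j = n \<and> odd m \<and> m < 2 ^ j}"

lemma labelled_dyadics_mem_open: "v \<in> labelled_dyadics n \<Longrightarrow> v \<in> {0<..<1}"
proof -
  assume "v \<in> labelled_dyadics n"
  then obtain m j where v: "v = real m / 2 ^ j" "odd m" "m < 2 ^ j"
    unfolding labelled_dyadics_def by auto
  then have "0 < m" "real m < 2 ^ j" by (auto intro: odd_pos)
  then show ?thesis unfolding v(1) by (simp add: field_simps)
qed

lemma labelled_dyadics_level:
  assumes "v \<in> labelled_dyadics n"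
  obtains j where "1 \<le> j" "label j = n" "(tent ^^ j) v = 1" "\<And>i. j < i \<Longrightarrow> (tent ^^ i) v = 0"
proof -
  from assms obtain m j where v: "v = real m / 2 ^ j" "1 \<le> j" "label j = n" "odd m" "m < 2 ^ j"
    unfolding labelled_dyadics_def by auto
  show ?thesis
  proof (rule that[OF v(2,3)])
    show "(tent ^^ j) v = 1" unfolding v(1) by (rule funpow_tent_odd_dyadic[OF v(2,4,5)])
    show "(tent ^^ i) v = 0" if "j < i" for i
      unfolding v(1) by (rule funpow_tent_beyond_odd_dyadic[OF v(2,4,5) that])
  qed
qed

lemma labelled_dyadics_disjoint:
  assumes "n \<noteq> n'"
  shows "labelled_dyadics n \<inter> labelled_dyadics n' = {}"
proof (rule ccontr)
  assume "labelled_dyadics n \<inter> labelled_dyadics n' \<noteq> {}"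
  then obtain v where "v \<in> labelled_dyadics n" "v \<in> labelled_dyadics n'" by auto
  then obtain j j' where j: "label j = n" "(tent ^^ j) v = 1" "\<And>i. j < i \<Longrightarrow> (tent ^^ i) v = 0"
    and j': "label j' = n'" "(tent ^^ j') v = 1" "\<And>i. j' < i \<Longrightarrow> (tent ^^ i) v = 0"
    by (metis labelled_dyadics_level)
  have "j = j'"
  proof (rule linorder_cases[of j j'])
    assume "j < j'"
    then show ?thesis using j(3)[of j'] j'(2) by simp
  next
    assume "j' < j"
    then show ?thesis using j'(3)[of j] j(2) by simp
  qed
  then show False using j j' assms by simp
qed

lemma countable_labelled_dyadics: "countable (labelled_dyadics n)"
proof (rule countable_subset)
  show "labelled_dyadics n \<subseteq> (\<lambda>(m, j). real m / 2 ^ j) ` UNIV"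
    unfolding labelled_dyadics_def by auto
qed simp

lemma exists_odd_dyadic_near:
  assumes y: "y \<in> {0..1}" and j: "1 \<le> j"
  shows "\<exists>m. odd m \<and> m < 2 ^ j \<and> \<bar>real m / 2 ^ j - y\<bar> \<le> 1 / 2 ^ j"
proof -
  define P :: nat where "P = 2 ^ (j - 1)"
  have jj: "j = Suc (j - 1)" using j by simp
  have P: "P \<ge> 1" "(2::nat) ^ j = 2 * P" "(2::real) ^ j = 2 * real P"
    unfolding P_def by (simp, (subst jj, simp)+)
  define q where "q = nat \<lfloor>y * real P\<rfloor>"
  have q: "real q \<le> y * real P" "y * real P < real q + 1"
    unfolding q_def using y by auto
  show ?thesis
  proof (cases "q \<le> P - 1")
    case True
    have "\<bar>real (2 * q + 1) - 2 * real P * y\<bar> \<le> 1"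
      using q by (simp add: algebra_simps abs_le_iff)
    then have "\<bar>real (2 * q + 1) / 2 ^ j - y\<bar> \<le> 1 / 2 ^ j"
      unfolding P(3) using P(1) by (simp add: abs_le_iff divide_simps algebra_simps)
    moreover have "2 * q + 1 < 2 ^ j" unfolding P(2) using True P(1) by simp
    ultimately show ?thesis by (intro exI[of _ "2 * q + 1"]) simp
  next
    case False
    then have "1 * real P \<le> y * real P" using q(1) by simp
    then have "y = 1" using y P(1) by (simp add: mult_le_cancel_right)
    have "real (2 * P - 1) = 2 * real P - 1" using P(1) by (simp add: of_nat_diff)
    then have "\<bar>real (2 * P - 1) / 2 ^ j - y\<bar> \<le> 1 / 2 ^ j"
      unfolding P(3) using \<open>y = 1\<close> P(1) by (simp add: divide_simps)
    moreover have "odd (2 * P - 1)" "2 * P - 1 < 2 ^ j" unfolding P(2) using P(1) by auto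
    ultimately show ?thesis by blast
  qed
qed

lemma labelled_dyadics_dense:
  assumes "y \<in> {0..1}" "\<epsilon> > 0"
  shows "\<exists>v\<in>labelled_dyadics n. \<bar>v - y\<bar> < \<epsilon>"
proof -
  obtain i where i: "(1/2::real) ^ i < \<epsilon>" using real_arch_pow_inv[OF assms(2), of "1/2"] by auto
  define j where "j = prod_encode (n, i) + 1"
  have j: "1 \<le> j" "label j = n" "i \<le> j"
    unfolding j_def label_def using le_prod_encode_2[of i n] by auto
  obtain m where m: "odd m" "m < 2 ^ j" "\<bar>real m / 2 ^ j - y\<bar> \<le> 1 / 2 ^ j"
    using exists_odd_dyadic_near[OF assms(1) j(1)] by auto
  have "(1::real) / 2 ^ j \<le> (1/2) ^ i"
    using j(3) by (simp add: power_one_over[symmetric] power_decreasing)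
  then have "\<bar>real m / 2 ^ j - y\<bar> < \<epsilon>" using m(3) i by linarith
  moreover have "real m / 2 ^ j \<in> labelled_dyadics n"
    unfolding labelled_dyadics_def using j m by auto
  ultimately show ?thesis by blast
qed

definition orbit_set :: "nat \<Rightarrow> real set" where
  "orbit_set n = (\<lambda>(v, z). orbit_point v z) ` (labelled_dyadics n \<times> UNIV)"

lemma orbit_set_iff: "s \<in> orbit_set n \<longleftrightarrow> (\<exists>v\<in>labelled_dyadics n. \<exists>z. s = orbit_point v z)"
  unfolding orbit_set_def by auto

lemma countable_orbit_set: "countable (orbit_set n)"
  unfolding orbit_set_def using countable_labelled_dyadics by auto

lemma orbit_set_subset: "orbit_set n \<subseteq> {-1<..<1}"
proof
  fix s assume "s \<in> orbit_set n"
  then obtain v z where v: "v \<in> labelled_dyadics n" "s = orbit_point v z"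
    unfolding orbit_set_iff by blast
  have "v \<in> {0..1}" using labelled_dyadics_mem_open[OF v(1)] by simp
  then show "s \<in> {-1<..<1}"
    unfolding v(2) by (rule orbit_point_mem_open)
qed

lemma orbit_set_disjoint:
  assumes "n \<noteq> n'"
  shows "orbit_set n \<inter> orbit_set n' = {}"
proof (rule ccontr)
  assume "orbit_set n \<inter> orbit_set n' \<noteq> {}"
  then obtain s where "s \<in> orbit_set n" "s \<in> orbit_set n'" by blast
  then obtain v v' z z' where v: "v \<in> labelled_dyadics n" "v' \<in> labelled_dyadics n'"
    and eq: "orbit_point v z = orbit_point v' z'"
    unfolding orbit_set_iff by blast
  have "v = v'"
    using fund_coord_orbit_point[OF labelled_dyadics_mem_open[OF v(1)], of z]
      fund_coord_orbit_point[OF labelled_dyadics_mem_open[OF v(2)], of z'] eq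
    by simp
  then show False
    using labelled_dyadics_disjoint[OF assms] v by blast
qed

lemma JJ_subset_closure_orbit_set: "JJ \<subseteq> closure (orbit_set n)"
proof -
  have "{-1<..<1} \<subseteq> closure (orbit_set n)"
  proof
    fix x :: real assume "x \<in> {-1<..<1}"
    then obtain w z where w: "w \<in> {0..1}" "orbit_point w z = x"
      using orbit_point_surj by blast
    show "x \<in> closure (orbit_set n)"
      unfolding closure_approachable
    proof (intro allI impI)
      fix \<epsilon> :: real assume "\<epsilon> > 0"
      then obtain v where v: "v \<in> labelled_dyadics n" "\<bar>v - w\<bar> < \<epsilon>"
        using labelled_dyadics_dense[OF w(1)] by blast
      then have "orbit_point v z \<in> orbit_set n"
        unfolding orbit_set_iff by blast
      moreover have "dist (orbit_point v z) x < \<epsilon>"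
        using orbit_point_dist_le[of v z w] w(2) v(2) unfolding dist_real_def by linarith
      ultimately show "\<exists>s\<in>orbit_set n. dist s x < \<epsilon>" by blast
    qed
  qed
  then have "closure {-1<..<1} \<subseteq> closure (orbit_set n)"
    by (rule closure_minimal[OF _ closed_closure])
  then show ?thesis unfolding JJ_def closure_greaterThanLessThan[of "-1 :: real" 1] by simp
qed

lemma horizontal_segment:
  fixes C :: "(real \<times> real) set"
  assumes "C \<noteq> {}" "connected C" "closed C" "C \<subseteq> {-1..1} \<times> {e}"
  shows "C = {Inf (fst ` C)..Sup (fst ` C)} \<times> {e}"
    and "-1 \<le> Inf (fst ` C)" "Inf (fst ` C) \<le> Sup (fst ` C)" "Sup (fst ` C) \<le> 1"
proof -
  have "compact C"
    using compact_Int_closed[OF compact_Times[OF compact_Icc[of "-1" 1] compact_sing[of e]] assms(3)] assms(4)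
    by (simp add: Int_absorb1)
  then have "compact (fst ` C)" "connected (fst ` C)"
    using assms(2) by (auto intro!: compact_continuous_image connected_continuous_image
        continuous_on_fst continuous_on_id)
  then obtain a b where ab: "fst ` C = {a..b}"
    using connected_compact_interval_1 by blast
  have "a \<le> b" using ab assms(1) by auto
  then have Inf_Sup: "Inf (fst ` C) = a" "Sup (fst ` C) = b"
    unfolding ab by simp_all
  have "C \<subseteq> {a..b} \<times> {e}"
  proof
    fix p assume "p \<in> C"
    then have "fst p \<in> {a..b}" "snd p = e" using assms(4) ab by (auto intro: imageI)
    then show "p \<in> {a..b} \<times> {e}" by (cases p) auto
  qed
  moreover have "{a..b} \<times> {e} \<subseteq> C"
  proof
    fix p assume "p \<in> {a..b} \<times> {e}"
    then obtain q where "q \<in> C" "fst q = fst p" "snd p = e"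
      unfolding ab[symmetric] by auto
    moreover have "snd q = e" using \<open>q \<in> C\<close> assms(4) by auto
    ultimately show "p \<in> C" by (metis prod.collapse)
  qed
  ultimately show "C = {Inf (fst ` C)..Sup (fst ` C)} \<times> {e}"
    unfolding Inf_Sup by blast
  have "{a..b} \<subseteq> {-1..1}" using assms(4) unfolding ab[symmetric] by auto
  then show "-1 \<le> Inf (fst ` C)" "Inf (fst ` C) \<le> Sup (fst ` C)" "Sup (fst ` C) \<le> 1"
    unfolding Inf_Sup using \<open>a \<le> b\<close> by auto
qed

lemma at_within_Times_open_interval:
  fixes a b s :: real
  assumes "s \<in> {a<..<b}" "{a<..<b} \<subseteq> T"
  shows "at (r, s) within (A \<times> T) = at (r, s) within (A \<times> {a<..<b})"
  by (rule at_within_nhd[of _ "UNIV \<times> {a<..<b}"]) (use assms in \<open>auto intro!: open_Times open_greaterThanLessThan\<close>)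

lemma sq_eq: "sq = {-1..1} \<times> {-1..1}"
  unfolding sq_def JJ_def ..

lemma compact_sq: "compact sq"
  unfolding sq_eq by (intro compact_Times) auto

lemma f01_mem_open_iff: "s \<in> {-1..1} \<Longrightarrow> f01 s \<in> {-1<..<1} \<longleftrightarrow> s \<in> {-1<..<1}"
  and f01_inv_mem_open_iff: "s \<in> {-1..1} \<Longrightarrow> f01_inv s \<in> {-1<..<1} \<longleftrightarrow> s \<in> {-1<..<1}"
  unfolding f01_inv_def f01_def by auto

lemma f02_Jline: "f02 ` Jline s = JJ \<times> {f01 s}"
proof -
  have "Jline s = (\<lambda>r. (r, s)) ` JJ"
    unfolding Jline_def by auto
  then have "f02 ` Jline s = (\<lambda>r. (r, f01 s)) ` JJ"
    by (simp add: image_image f02_def)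
  also have "\<dots> = JJ \<times> {f01 s}"
    by auto
  finally show ?thesis .
qed

locale rising_construction =
  fixes Btop Bbot :: "nat \<Rightarrow> real \<Rightarrow> real"
  assumes Btop_mem: "\<And>j t. Btop j t \<in> {-1..1}" and Bbot_mem: "\<And>j t. Bbot j t \<in> {-1..1}"
    and continuous_Btop: "\<And>j. continuous_on UNIV (Btop j)"
    and continuous_Bbot: "\<And>j. continuous_on UNIV (Bbot j)"
    and Btop_lipschitz: "\<And>j t t'. \<bar>Btop j t - Btop j t'\<bar> \<le> 4 * \<bar>t - t'\<bar>"
    and Bbot_lipschitz: "\<And>j t t'. \<bar>Bbot j t - Bbot j t'\<bar> \<le> 4 * \<bar>t - t'\<bar>"
begin

text \<open>By \<open>blend_stable\<close> the number of stages is irrelevant once it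
  exceeds \<open>slow_time s\<close>.\<close>

definition center :: "real \<Rightarrow> real" where
  "center s = (if s \<le> 0 then blend Bbot (nat \<lceil>slow_time s\<rceil>) s
               else blend Btop (nat \<lceil>slow_time s\<rceil>) s)"

lemma center_eq:
  assumes "slow_time s \<le> real M"
  shows "center s = (if s \<le> 0 then blend Bbot M s else blend Btop M s)"
proof -
  define m where "m = nat \<lceil>slow_time s\<rceil>"
  have m: "slow_time s \<le> real m" unfolding m_def by linarith
  have "blend B M s = blend B m s" for B
    using blend_stable[OF m, where M = M and B = B] blend_stable[OF assms, where M = m and B = B]
    by (cases "m \<le> M") auto
  then show ?thesis unfolding center_def m_def by simp
qed

lemma center_mem: "center s \<in> {-1..1}"
  unfolding center_def using blend_mem[OF Btop_mem] blend_mem[OF Bbot_mem] by auto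

lemma continuous_on_center: "continuous_on {-1<..<1} center"
proof -
  define U where "U M = {-1<..<1} \<inter> slow_time -` {..<real M}" for M :: nat
  have "(\<Union>M. U M) = {-1<..<1}"
    unfolding U_def using reals_Archimedean2 by blast
  moreover have "continuous_on (\<Union>M. U M) center"
  proof (rule continuous_on_open_UN)
    fix M
    show "open (U M)"
      unfolding U_def by (rule continuous_open_preimage[OF continuous_on_slow_time]) auto
    have "continuous_on {-1<..<1} (\<lambda>s. if s \<le> 0 then blend Bbot M s else blend Btop M s)"
      by (rule continuous_on_cases_le)
        (auto intro: continuous_on_subset[OF continuous_on_blend[OF continuous_Bbot]]
          continuous_on_subset[OF continuous_on_blend[OF continuous_Btop]] continuous_intros)
    then show "continuous_on (U M) center"
      by (rule continuous_on_subset[THEN continuous_on_eq])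
        (auto simp: U_def center_eq[OF less_imp_le])
  qed
  ultimately show ?thesis by simp
qed

lemma center_f01_diff:
  assumes "s \<in> {-1<..<1}" "0 < s \<or> s < -1/2"
  shows "\<bar>center (f01 s) - center s\<bar> \<le> 6 * \<bar>slow_time (f01 s) - slow_time s\<bar>"
proof -
  have same_coord: "fund_coord (f01 s) = fund_coord s"
    by (rule fund_coord_f01[OF assms])
  have same_side: "f01 s \<le> 0 \<longleftrightarrow> s \<le> 0"
    using assms unfolding f01_def by auto
  obtain M :: nat where M: "max (slow_time s) (slow_time (f01 s)) \<le> real M"
    using real_arch_simple by blast
  show ?thesis
    using center_eq[of s M] center_eq[of "f01 s" M] M same_side
      blend_lipschitz[OF Btop_mem Btop_lipschitz same_coord, where M = M]
      blend_lipschitz[OF Bbot_mem Bbot_lipschitz same_coord, where M = M]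
    by auto
qed

definition fiber :: "real \<Rightarrow> real \<Rightarrow> real" where
  "fiber s = squeeze (center s) (squeeze_factor s)"

lemma fiber_strict_mono: "strict_mono_on {-1..1} (fiber s)"
  unfolding fiber_def by (rule squeeze_strict_mono[OF squeeze_factor_ge_1 center_mem])

lemma fiber_endpoints [simp]: "fiber s 1 = 1" "fiber s (-1) = -1"
  unfolding fiber_def using squeeze_factor_ge_1 by simp_all

lemma fiber_mem: "r \<in> {-1..1} \<Longrightarrow> fiber s r \<in> {-1..1}"
  unfolding fiber_def by (rule squeeze_mem[OF squeeze_factor_ge_1 center_mem])

lemma fiber_denominators_nonzero:
  assumes "r \<in> {-1..1}"
  shows "squeeze_factor s * (1 + r) + (1 - r) \<noteq> 0"
    "squeeze_factor s * (1 - r) + (1 + r) \<noteq> 0"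
  using push_up_denom_ge[OF squeeze_factor_ge_1, of r s] push_up_denom_ge[OF squeeze_factor_ge_1, of "- r" s]
    assms by auto

lemma continuous_on_fiber_right: "continuous_on {-1..1} (fiber s)"
  unfolding fiber_def squeeze_def push_up_def
  by (intro continuous_intros) (auto simp: fiber_denominators_nonzero)

lemma continuous_on_fiber: "continuous_on ({-1<..<1} \<times> {-1..1}) (\<lambda>p. fiber (fst p) (snd p))"
proof -
  have "continuous_on ({-1<..<1} \<times> {-1..1}) (\<lambda>p. center (fst p))"
    "continuous_on ({-1<..<1} \<times> {-1..1}) (\<lambda>p. squeeze_factor (fst p))"
    by (auto intro!: continuous_on_compose2[OF continuous_on_center]
        continuous_on_compose2[OF continuous_on_squeeze_factor] continuous_intros)
  then show ?thesis
    unfolding fiber_def squeeze_def push_up_def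
    by (intro continuous_intros) (auto simp: fiber_denominators_nonzero)
qed

lemma inj_on_fiber: "inj_on (fiber s) {-1..1}"
  by (rule strict_mono_on_imp_inj_on[OF fiber_strict_mono])

lemma fiber_bij: "bij_betw (fiber s) {-1..1} {-1..1}"
proof (rule bij_betw_imageI[OF inj_on_fiber])
  show "fiber s ` {-1..1} = {-1..1}"
  proof
    show "fiber s ` {-1..1} \<subseteq> {-1..1}" using fiber_mem by auto
    show "{-1..1} \<subseteq> fiber s ` {-1..1}"
      using IVT'[of "fiber s" "-1" _ 1] continuous_on_fiber_right[of s] by force
  qed
qed

definition fiber_inv :: "real \<Rightarrow> real \<Rightarrow> real" where
  "fiber_inv s = the_inv_into {-1..1} (fiber s)"

lemma fiber_inv_mem: "y \<in> {-1..1} \<Longrightarrow> fiber_inv s y \<in> {-1..1}"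
  using fiber_bij[of s] unfolding fiber_inv_def bij_betw_def
  by (intro the_inv_into_into) auto

lemma fiber_fiber_inv: "y \<in> {-1..1} \<Longrightarrow> fiber s (fiber_inv s y) = y"
  and fiber_inv_fiber: "r \<in> {-1..1} \<Longrightarrow> fiber_inv s (fiber s r) = r"
  using fiber_bij[of s] unfolding fiber_inv_def bij_betw_def
  by (auto intro: f_the_inv_into_f the_inv_into_f_f)

lemma fiber_inv_endpoints [simp]: "fiber_inv s 1 = 1" "fiber_inv s (-1) = -1"
  using fiber_inv_fiber[of 1 s] fiber_inv_fiber[of "-1" s] by simp_all

lemma fiber_inv_mem_open: "y \<in> {-1<..<1} \<Longrightarrow> fiber_inv s y \<in> {-1<..<1}"
  using fiber_inv_mem[of y s] fiber_fiber_inv[of y s] by (cases "fiber_inv s y = 1 \<or> fiber_inv s y = -1") auto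

lemma continuous_on_fiber_inv:
  "continuous_on ({-1..1} \<times> {-1<..<1}) (\<lambda>p. fiber_inv (snd p) (fst p))"
proof -
  have compact_piece: "continuous_on ({-1..1} \<times> {-c..c}) (\<lambda>p. fiber_inv (snd p) (fst p))"
    if c: "c < 1" for c
  proof -
    define S where "S = {-1..1::real} \<times> {-c..c}"
    define \<Phi> where "\<Phi> p = (fiber (snd p) (fst p), snd p)" for p :: "real \<times> real"
    have "continuous_on S (\<lambda>p. fiber (fst (snd p, fst p)) (snd (snd p, fst p)))"
      by (rule continuous_on_compose2[OF continuous_on_fiber])
        (use c in \<open>auto intro!: continuous_intros simp: S_def\<close>)
    then have "continuous_on S \<Phi>"
      unfolding \<Phi>_def by (auto intro!: continuous_intros)
    moreover have "\<Phi> ` S = S"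
    proof
      show "\<Phi> ` S \<subseteq> S" unfolding S_def \<Phi>_def using fiber_mem by auto
      show "S \<subseteq> \<Phi> ` S"
      proof
        fix p assume "p \<in> S"
        then have "(fiber_inv (snd p) (fst p), snd p) \<in> S" "\<Phi> (fiber_inv (snd p) (fst p), snd p) = p"
          using fiber_inv_mem[of "fst p" "snd p"] fiber_fiber_inv[of "fst p" "snd p"]
          unfolding S_def \<Phi>_def by auto
        then show "p \<in> \<Phi> ` S" by force
      qed
    qed
    moreover have "inj_on \<Phi> S"
      using inj_on_fiber unfolding inj_on_def S_def \<Phi>_def by auto
    moreover have "compact S" unfolding S_def by (intro compact_Times) auto
    ultimately obtain \<Psi> where \<Psi>: "homeomorphism S S \<Phi> \<Psi>"
      using homeomorphism_compact by blast
    have \<Psi>_eq: "\<Psi> p = (fiber_inv (snd p) (fst p), snd p)" if "p \<in> S" for p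
      using \<Psi> that fiber_inv_mem fiber_fiber_inv unfolding homeomorphism_def S_def \<Phi>_def
      by (metis (no_types, lifting) SigmaE SigmaI fst_conv snd_conv image_eqI)
    have "continuous_on S (\<lambda>p. fst (\<Psi> p))"
      using \<Psi> unfolding homeomorphism_def by (auto intro: continuous_intros)
    then show ?thesis
      unfolding S_def[symmetric] by (rule continuous_on_eq) (simp add: \<Psi>_eq)
  qed
  show ?thesis
    unfolding continuous_on_eq_continuous_within
  proof
    fix p :: "real \<times> real"
    assume "p \<in> {-1..1} \<times> {-1<..<1}"
    moreover obtain r s where rs: "p = (r, s)" by (cases p)
    ultimately have p: "(r, s) \<in> {-1..1} \<times> {-1<..<1}" by simp
    define c where "c = (1 + \<bar>s\<bar>) / 2"
    have c: "c < 1" "s \<in> {-c<..<c}" "{-c<..<c} \<subseteq> {-1<..<1}"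
      using p unfolding c_def by (auto simp: abs_if field_simps)
    have "continuous (at (r, s) within ({-1..1} \<times> {-c..c})) (\<lambda>p. fiber_inv (snd p) (fst p))"
      using compact_piece[OF c(1)] p c(2) by (auto simp: continuous_on_eq_continuous_within)
    then have "continuous (at (r, s) within ({-1..1} \<times> {-c<..<c})) (\<lambda>p. fiber_inv (snd p) (fst p))"
      by (rule continuous_within_subset) auto
    then show "continuous (at p within ({-1..1} \<times> {-1<..<1})) (\<lambda>p. fiber_inv (snd p) (fst p))"
      unfolding rs by (subst at_within_Times_open_interval[OF c(2,3)])
  qed
qed

text \<open>The conjugate of the base map \<open>h\<close> by the fibre homeomorphisms:
  \<open>transport h (fiber s x, s) = (fiber (h s) x, h s)\<close> on the open strip.\<close>

definition transport :: "(real \<Rightarrow> real) \<Rightarrow> real \<times> real \<Rightarrow> real \<times> real" where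
  "transport h p =
     (if snd p \<in> {-1<..<1} then fiber (h (snd p)) (fiber_inv (snd p) (fst p)) else fst p, h (snd p))"

definition rising_map :: "real \<times> real \<Rightarrow> real \<times> real" where
  "rising_map = transport f01"

lemma transport_strip: "s \<in> {-1<..<1} \<Longrightarrow> transport h (r, s) = (fiber (h s) (fiber_inv s r), h s)"
  and transport_edge: "s \<notin> {-1<..<1} \<Longrightarrow> transport h (r, s) = (r, h s)"
  unfolding transport_def by auto

lemma transport_mem_sq:
  assumes "\<And>s. s \<in> {-1..1} \<Longrightarrow> h s \<in> {-1..1}" "p \<in> sq"
  shows "transport h p \<in> sq"
  using assms fiber_mem fiber_inv_mem unfolding transport_def sq_eq by (auto simp: mem_Times_iff)

lemma transport_transport:
  assumes "\<And>s. s \<in> {-1..1} \<Longrightarrow> h s \<in> {-1<..<1} \<longleftrightarrow> s \<in> {-1<..<1}"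
    and "\<And>s. s \<in> {-1..1} \<Longrightarrow> g (h s) = s"
    and "p \<in> sq"
  shows "transport g (transport h p) = p"
proof -
  obtain r s where p: "p = (r, s)" "r \<in> {-1..1}" "s \<in> {-1..1}"
    using assms(3) unfolding sq_eq by auto
  show ?thesis
    using assms(1,2)[OF p(3)] p(1,3) fiber_fiber_inv[OF p(2)] fiber_inv_fiber[OF fiber_inv_mem[OF p(2)]]
    by (cases "s \<in> {-1<..<1}") (auto simp: transport_def)
qed

lemma funpow_transport:
  assumes "\<And>s. s \<in> {-1<..<1} \<Longrightarrow> h s \<in> {-1<..<1}" "r \<in> {-1..1}" "s \<in> {-1<..<1}"
  shows "(transport h ^^ k) (r, s) = (fiber ((h ^^ k) s) (fiber_inv s r), (h ^^ k) s)"
proof (induction k)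
  case 0
  show ?case using fiber_fiber_inv[OF assms(2)] by simp
next
  case (Suc k)
  have "(h ^^ k) s \<in> {-1<..<1}"
  proof (induction k)
    case (Suc k)
    show ?case using assms(1)[OF Suc.IH] by simp
  qed (use assms(3) in simp)
  with Suc show ?case
    using fiber_inv_fiber[OF fiber_inv_mem[OF assms(2)]] by (simp add: transport_strip)
qed

lemma continuous_on_transport_strip:
  assumes "continuous_on {-1<..<1} h" "\<And>s. s \<in> {-1<..<1} \<Longrightarrow> h s \<in> {-1<..<1}"
  shows "continuous_on ({-1..1} \<times> {-1<..<1}) (transport h)"
proof -
  let ?S = "{-1..1} \<times> {-1<..<1::real}"
  have "continuous_on ?S (\<lambda>p. (h (snd p), fiber_inv (snd p) (fst p)))"
    by (intro continuous_on_Pair continuous_on_fiber_inv continuous_on_compose2[OF assms(1)]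
        continuous_intros) auto
  moreover have "(\<lambda>p. (h (snd p), fiber_inv (snd p) (fst p))) ` ?S \<subseteq> {-1<..<1} \<times> {-1..1}"
    using assms(2) fiber_inv_mem by auto
  ultimately have "continuous_on ?S (\<lambda>p. fiber (h (snd p)) (fiber_inv (snd p) (fst p)))"
    using continuous_on_compose2[OF continuous_on_fiber] by fastforce
  then have "continuous_on ?S (\<lambda>p. (fiber (h (snd p)) (fiber_inv (snd p) (fst p)), h (snd p)))"
    by (intro continuous_on_Pair continuous_on_compose2[OF assms(1)] continuous_intros) auto
  then show ?thesis
    by (rule continuous_on_eq) (auto simp: transport_def)
qed

lemma rising_map_fst_near_edge:
  assumes r: "r \<in> {-1..1}" and s: "s \<in> {-1<..<1}" "0 < s \<or> s < -1/2" and depth: "depth s \<ge> 1"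
  shows "\<bar>fst (rising_map (r, s)) - r\<bar> \<le> 8 / sqrt (depth s)"
proof -
  define x where "x = fiber_inv s r"
  have x: "x \<in> {-1..1}" "r = fiber s x"
    unfolding x_def using fiber_inv_mem[OF r] fiber_fiber_inv[OF r] by auto
  have s': "0 \<le> s \<or> s < -1/2" using s by auto
  have step: "\<bar>depth (f01 s) - depth s\<bar> \<le> 1"
    by (rule depth_f01_diff[OF s(1) s'])
  have "\<bar>depth s - depth (f01 s)\<bar> / sqrt (depth s) \<le> 1 / sqrt (depth s)"
    using step depth_nonneg[of s] by (intro divide_right_mono) (auto simp: abs_minus_commute)
  then have "\<bar>slow_time (f01 s) - slow_time s\<bar> \<le> 1 / sqrt (depth s)"
    using abs_sqrt_diff_le[of "depth s" "depth (f01 s)"] depth depth_nonneg[of "f01 s"]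
    unfolding slow_time_def by (simp add: abs_minus_commute)
  then have "\<bar>center (f01 s) - center s\<bar> \<le> 6 / sqrt (depth s)"
    using center_f01_diff[OF s] by simp
  moreover have "2 * \<bar>squeeze_factor (f01 s) - squeeze_factor s\<bar> / squeeze_factor (f01 s)
      \<le> 2 / sqrt (depth s)"
  proof -
    have "sqrt (depth s) \<le> depth s"
      using depth by (simp add: real_sqrt_le_iff' power2_eq_square)
    also have "\<dots> \<le> squeeze_factor (f01 s)"
      using step unfolding squeeze_factor_def by linarith
    finally have "1 / squeeze_factor (f01 s) \<le> 1 / sqrt (depth s)"
      using depth squeeze_factor_ge_1[of "f01 s"] by (intro divide_left_mono) auto
    moreover have "\<bar>squeeze_factor (f01 s) - squeeze_factor s\<bar> / squeeze_factor (f01 s)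
        \<le> 1 / squeeze_factor (f01 s)"
      using step squeeze_factor_ge_1[of "f01 s"] unfolding squeeze_factor_def
      by (intro divide_right_mono) auto
    ultimately show ?thesis by simp
  qed
  ultimately have "\<bar>fiber (f01 s) x - fiber s x\<bar> \<le> 8 / sqrt (depth s)"
    using squeeze_param_diff[OF squeeze_factor_ge_1[of "f01 s"] squeeze_factor_ge_1[of s] x(1)
        center_mem[of "f01 s"] center_mem[of s]]
    unfolding fiber_def by (simp add: abs_minus_commute)
  then show ?thesis
    using s(1) x unfolding rising_map_def x_def by (simp add: transport_strip)
qed

lemma rising_map_fst_uniform_near_edge:
  assumes e: "e \<in> {-1, 1}" and \<epsilon>: "\<epsilon> > 0"
  shows "\<exists>\<delta>>0. \<forall>r\<in>{-1..1}. \<forall>s\<in>{-1..1}. \<bar>s - e\<bar> < \<delta> \<longrightarrow> \<bar>fst (rising_map (r, s)) - r\<bar> < \<epsilon>"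
proof -
  define T where "T = max 1 ((8 / \<epsilon>)\<^sup>2) + 1"
  define good where "good s \<longleftrightarrow> s \<in> {-1<..<1} \<and> (0 < s \<or> s < -1/2) \<and> T \<le> depth s" for s
  have bound: "\<bar>fst (rising_map (r, s)) - r\<bar> < \<epsilon>" if "r \<in> {-1..1}" "good s" for r s
  proof -
    have T: "1 \<le> depth s" "(8 / \<epsilon>)\<^sup>2 < depth s"
      using that(2) unfolding good_def T_def by auto
    then have "8 / \<epsilon> < sqrt (depth s)"
      using real_less_rsqrt by blast
    then have "8 / sqrt (depth s) < \<epsilon>"
      using \<epsilon> T by (simp add: field_simps)
    with rising_map_fst_near_edge[OF that(1) _ _ T(1)] that(2) show ?thesis
      unfolding good_def by fastforce
  qed
  have "\<exists>\<delta>>0. \<forall>s\<in>{-1..1}. s \<noteq> e \<longrightarrow> \<bar>s - e\<bar> < \<delta> \<longrightarrow> good s"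
  proof (cases "e = 1")
    case True
    have "eventually (\<lambda>s. T \<le> depth s) (at_left 1)"
      using depth_tendsto_upper by (simp add: filterlim_at_top)
    moreover have "eventually (\<lambda>s. s \<in> {0<..<1}) (at_left (1::real))"
      by (rule eventually_at_left_real) simp
    ultimately have "eventually good (at_left 1)"
      unfolding good_def by eventually_elim auto
    then obtain b where "b < 1" "\<And>s. b < s \<Longrightarrow> s < 1 \<Longrightarrow> good s"
      unfolding eventually_at_left_field by blast
    then show ?thesis using True by (intro exI[of _ "1 - b"]) auto
  next
    case False
    then have e: "e = -1" using e by auto
    have "eventually (\<lambda>s. T \<le> depth s) (at_right (-1))"
      using depth_tendsto_lower by (simp add: filterlim_at_top)
    moreover have "eventually (\<lambda>s. s \<in> {-1<..<-1/2}) (at_right (-1::real))"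
      by (rule eventually_at_right_real) simp
    ultimately have "eventually good (at_right (-1))"
      unfolding good_def by eventually_elim auto
    then obtain b where "-1 < b" "\<And>s. -1 < s \<Longrightarrow> s < b \<Longrightarrow> good s"
      unfolding eventually_at_right_field by blast
    then show ?thesis using e by (intro exI[of _ "b + 1"]) auto
  qed
  then obtain \<delta> where "\<delta> > 0" and \<delta>: "\<And>s. s \<in> {-1..1} \<Longrightarrow> s \<noteq> e \<Longrightarrow> \<bar>s - e\<bar> < \<delta> \<Longrightarrow> good s"
    by blast
  have "\<bar>fst (rising_map (r, e)) - r\<bar> < \<epsilon>" for r
    using e \<epsilon> unfolding rising_map_def by (auto simp: transport_edge)
  with \<delta> bound \<open>\<delta> > 0\<close> show ?thesis by metis
qed

lemma continuous_on_rising_map: "continuous_on sq rising_map"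
  unfolding continuous_on_eq_continuous_within
proof
  fix p assume "p \<in> sq"
  moreover obtain r s where p: "p = (r, s)" by (cases p)
  ultimately have rs: "r \<in> {-1..1}" "s \<in> {-1..1}" unfolding sq_eq by auto
  show "continuous (at p within sq) rising_map"
  proof (cases "s \<in> {-1<..<1}")
    case True
    have "continuous_on ({-1..1} \<times> {-1<..<1}) rising_map"
      unfolding rising_map_def
      by (rule continuous_on_transport_strip[OF continuous_on_f01 f01_mem_open])
    then have "continuous (at p within ({-1..1} \<times> {-1<..<1})) rising_map"
      using rs True p by (simp add: continuous_on_eq_continuous_within)
    then show ?thesis
      unfolding p sq_eq by (subst at_within_Times_open_interval[OF True]) auto
  next
    case False
    then have e: "s \<in> {-1, 1}" using rs by auto
    define D where "D q = fst (rising_map q) - fst q" for q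
    have "(D \<longlongrightarrow> 0) (at p within sq)"
    proof (rule tendstoI)
      fix \<epsilon> :: real assume "\<epsilon> > 0"
      then obtain \<delta> where "\<delta> > 0"
        and \<delta>: "\<And>r' s'. r' \<in> {-1..1} \<Longrightarrow> s' \<in> {-1..1} \<Longrightarrow> \<bar>s' - s\<bar> < \<delta>
            \<Longrightarrow> \<bar>fst (rising_map (r', s')) - r'\<bar> < \<epsilon>"
        using rising_map_fst_uniform_near_edge[OF e] by blast
      show "eventually (\<lambda>q. dist (D q) 0 < \<epsilon>) (at p within sq)"
        unfolding eventually_at
      proof (intro exI[of _ \<delta>] conjI ballI impI)
        fix q assume "q \<in> sq" "q \<noteq> p \<and> dist q p < \<delta>"
        moreover have "\<bar>snd q - s\<bar> \<le> dist q p"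
          using dist_snd_le[of q p] p by (simp add: dist_real_def)
        ultimately show "dist (D q) 0 < \<epsilon>"
          using \<delta>[of "fst q" "snd q"] unfolding D_def sq_eq by (cases q) auto
      qed (rule \<open>\<delta> > 0\<close>)
    qed
    moreover have "isCont f01 s"
      using continuous_on_f01[of UNIV] by (simp add: continuous_on_eq_continuous_at)
    moreover have "((\<lambda>q. fst q) \<longlongrightarrow> r) (at p within sq)" "((\<lambda>q. snd q) \<longlongrightarrow> s) (at p within sq)"
      unfolding p by (auto intro!: tendsto_eq_intros)
    ultimately have "((\<lambda>q. (fst q + D q, f01 (snd q))) \<longlongrightarrow> (r + 0, f01 s)) (at p within sq)"
      by (intro tendsto_Pair tendsto_add isCont_tendsto_compose[where g = f01])
    moreover have "rising_map = (\<lambda>q. (fst q + D q, f01 (snd q)))"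
      unfolding D_def rising_map_def transport_def by auto
    moreover have "rising_map p = (r, f01 s)"
      using False unfolding p rising_map_def by (simp add: transport_edge)
    ultimately show ?thesis
      unfolding continuous_within by simp
  qed
qed

lemma transport_f01_inv_rising_map: "p \<in> sq \<Longrightarrow> transport f01_inv (rising_map p) = p"
  unfolding rising_map_def by (rule transport_transport[OF f01_mem_open_iff f01_inv_f01])

lemma rising_map_transport_f01_inv: "p \<in> sq \<Longrightarrow> rising_map (transport f01_inv p) = p"
  unfolding rising_map_def by (rule transport_transport[OF f01_inv_mem_open_iff f01_f01_inv])

lemma rising_map_image: "rising_map ` sq = sq"
proof
  show "rising_map ` sq \<subseteq> sq"
    unfolding rising_map_def using transport_mem_sq[OF f01_mem_closed] by auto
  show "sq \<subseteq> rising_map ` sq"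
  proof
    fix p assume p: "p \<in> sq"
    show "p \<in> rising_map ` sq"
    proof (rule image_eqI)
      show "p = rising_map (transport f01_inv p)" using rising_map_transport_f01_inv[OF p] ..
      show "transport f01_inv p \<in> sq" by (rule transport_mem_sq[OF f01_inv_mem_closed p])
    qed
  qed
qed

lemma inj_on_rising_map: "inj_on rising_map sq"
proof (rule inj_onI)
  fix p q assume "p \<in> sq" "q \<in> sq" "rising_map p = rising_map q"
  then show "p = q" using transport_f01_inv_rising_map by metis
qed

lemma inv_into_rising_map: "p \<in> sq \<Longrightarrow> inv_into sq rising_map p = transport f01_inv p"
  by (rule inv_into_f_eq[OF inj_on_rising_map transport_mem_sq[OF f01_inv_mem_closed]
        rising_map_transport_f01_inv])

lemma rising_map_frontier:
  assumes "p \<in> frontier sq"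
  shows "rising_map p = f02 p"
proof -
  obtain r s where p: "p = (r, s)" by (cases p)
  have "frontier sq = sq - {-1<..<1} \<times> {-1<..<1}"
    unfolding frontier_def closure_closed[OF compact_imp_closed[OF compact_sq]]
    unfolding sq_eq interior_Times by simp
  then have "r \<in> {-1, 1} \<or> s \<notin> {-1<..<1}"
    using assms unfolding p sq_eq by auto
  then show ?thesis
  proof
    assume "r \<in> {-1, 1}"
    then have "fiber (f01 s) (fiber_inv s r) = r" by auto
    then show ?thesis
      unfolding p rising_map_def f02_def
      by (cases "s \<in> {-1<..<1}") (simp_all add: transport_strip transport_edge)
  next
    assume "s \<notin> {-1<..<1}"
    then show ?thesis
      unfolding p rising_map_def f02_def by (simp add: transport_edge)
  qed
qed

lemma rising_map_Jline: "s \<in> JJ \<Longrightarrow> rising_map ` Jline s = JJ \<times> {f01 s}"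
proof -
  define g where "g r = (if s \<in> {-1<..<1} then fiber (f01 s) (fiber_inv s r) else r)" for r
  have "rising_map (r, s) = (g r, f01 s)" for r
    unfolding rising_map_def g_def transport_def by simp
  moreover have "Jline s = (\<lambda>r. (r, s)) ` JJ"
    unfolding Jline_def by auto
  ultimately have "rising_map ` Jline s = (\<lambda>r. (g r, f01 s)) ` JJ"
    by (simp add: image_image)
  also have "\<dots> = g ` JJ \<times> {f01 s}"
    by auto
  finally have image: "rising_map ` Jline s = g ` JJ \<times> {f01 s}" .
  have "g ` {-1..1} = {-1..1}"
  proof (cases "s \<in> {-1<..<1}")
    case True
    have "bij_betw (fiber_inv s) {-1..1} {-1..1}"
      unfolding fiber_inv_def by (rule bij_betw_the_inv_into[OF fiber_bij])
    then have "bij_betw (fiber (f01 s) \<circ> fiber_inv s) {-1..1} {-1..1}"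
      by (rule bij_betw_trans[OF _ fiber_bij])
    then show ?thesis using True unfolding g_def by (simp add: bij_betw_def comp_def)
  next
    case False
    then have "g = (\<lambda>r. r)" unfolding g_def by auto
    then show ?thesis by simp
  qed
  then show ?thesis unfolding image JJ_def by (rule arg_cong[where f = "\<lambda>A. A \<times> {f01 s}"])
qed

lemma normally_rising_rising_map: "normally_rising rising_map"
  unfolding normally_rising_def
proof (intro conjI ballI)
  show "\<exists>g. homeomorphism sq sq rising_map g"
    by (rule homeomorphism_compact[OF compact_sq continuous_on_rising_map rising_map_image
          inj_on_rising_map])
  show "rising_map p = f02 p" if "p \<in> frontier sq" for p
    by (rule rising_map_frontier[OF that])
  show "rising_map ` Jline s = f02 ` Jline s" if "s \<in> JJ" for s
    unfolding rising_map_Jline[OF that] f02_Jline ..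
qed

lemma center_at_level:
  assumes "1 \<le> j" "(tent ^^ j) (fund_coord s) = 1" "\<And>i. j < i \<Longrightarrow> (tent ^^ i) (fund_coord s) = 0"
    and "real j \<le> slow_time s"
  shows "center s = (if s \<le> 0 then Bbot j (slow_time s) else Btop j (slow_time s))"
proof -
  define M where "M = max j (nat \<lceil>slow_time s\<rceil>)"
  have "slow_time s \<le> real M" "j \<le> M"
    unfolding M_def by linarith+
  then show ?thesis
    using center_eq blend_at_level[OF assms] by simp
qed

lemma fiber_tendsto_center:
  assumes x: "x \<in> {-1<..<1}" and K: "filterlim (\<lambda>k. squeeze_factor (\<sigma> k)) at_top sequentially"
  shows "(\<lambda>k. fiber (\<sigma> k) x - center (\<sigma> k)) \<longlonglongrightarrow> 0"
proof (rule Lim_null_comparison)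
  define W where "W = 2 * ((1 - x) / (1 + x) + (1 + x) / (1 - x))"
  show "\<forall>\<^sub>F k in sequentially. norm (fiber (\<sigma> k) x - center (\<sigma> k)) \<le> W / squeeze_factor (\<sigma> k)"
    unfolding fiber_def W_def
    using squeeze_near_center[OF squeeze_factor_ge_1 x center_mem] by simp
  show "(\<lambda>k. W / squeeze_factor (\<sigma> k)) \<longlonglongrightarrow> 0"
    by (rule tendsto_divide_0[OF tendsto_const filterlim_at_top_imp_at_infinity[OF K]])
qed

lemma orbit_subseq_limits:
  assumes x: "x \<in> {-1<..<1}" and \<sigma>: "\<sigma> \<longlonglongrightarrow> e"
    and depth: "\<forall>\<^sub>F k in sequentially. depth (\<sigma> k) = real k + c"
    and center: "\<forall>\<^sub>F k in sequentially. center (\<sigma> k) = oscillate a b (slow_time (\<sigma> k))"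
    and "a \<le> b"
  shows "subseq_limits (\<lambda>k. (fiber (\<sigma> k) x, \<sigma> k)) = {a..b} \<times> {e}"
proof -
  have "\<forall>\<^sub>F k in sequentially. squeeze_factor (\<sigma> k) = 1 + real k + c"
    using depth by eventually_elim (simp add: squeeze_factor_def)
  moreover have "filterlim (\<lambda>k. 1 + real k + c) at_top sequentially"
    by real_asymp
  ultimately have "filterlim (\<lambda>k. squeeze_factor (\<sigma> k)) at_top sequentially"
    using filterlim_cong[OF refl refl] by (metis (mono_tags, lifting) eventually_mono)
  then have near_center: "(\<lambda>k. fiber (\<sigma> k) x - center (\<sigma> k)) \<longlonglongrightarrow> 0"
    by (rule fiber_tendsto_center[OF x])
  have "(\<lambda>k. dist (fiber (\<sigma> k) x, \<sigma> k) (center (\<sigma> k), e)) \<longlonglongrightarrow> 0"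
  proof (rule Lim_null_comparison)
    show "\<forall>\<^sub>F k in sequentially. norm (dist (fiber (\<sigma> k) x, \<sigma> k) (center (\<sigma> k), e))
        \<le> \<bar>fiber (\<sigma> k) x - center (\<sigma> k)\<bar> + \<bar>\<sigma> k - e\<bar>"
      by (simp add: dist_Pair_Pair dist_real_def sqrt_sum_squares_le_sum_abs)
    show "(\<lambda>k. \<bar>fiber (\<sigma> k) x - center (\<sigma> k)\<bar> + \<bar>\<sigma> k - e\<bar>) \<longlonglongrightarrow> 0"
      using tendsto_add[OF tendsto_rabs_zero[OF near_center] tendsto_rabs_zero[OF \<sigma>[THEN LIM_zero]]]
      by simp
  qed
  then have "subseq_limits (\<lambda>k. (fiber (\<sigma> k) x, \<sigma> k)) = subseq_limits (\<lambda>k. (center (\<sigma> k), e))"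
    by (rule subseq_limits_dist_tendsto_0)
  also have "\<dots> = subseq_limits (\<lambda>k. center (\<sigma> k)) \<times> {e}"
    by (rule subseq_limits_Pair_const)
  also have "subseq_limits (\<lambda>k. center (\<sigma> k)) = subseq_limits (\<lambda>k. oscillate a b (sqrt (real k + c)))"
  proof (rule subseq_limits_dist_tendsto_0[OF tendsto_eventually])
    show "\<forall>\<^sub>F k in sequentially. dist (center (\<sigma> k)) (oscillate a b (sqrt (real k + c))) = 0"
      using depth center by eventually_elim (simp add: slow_time_def)
  qed
  also have "\<dots> = {a..b}"
    by (rule subseq_limits_oscillate_sqrt) fact
  finally show ?thesis .
qed

lemma funpow_inv_into_rising_map:
  "p \<in> sq \<Longrightarrow> (inv_into sq rising_map ^^ k) p = (transport f01_inv ^^ k) p"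
proof (induction k)
  case (Suc k)
  have "(transport f01_inv ^^ k) p \<in> sq"
    using Suc.prems by (induction k) (auto intro: transport_mem_sq f01_inv_mem_closed)
  with Suc show ?case by (simp add: inv_into_rising_map)
qed simp

lemma limits_orbit_point:
  assumes v: "v \<in> {0<..<1}" and level: "1 \<le> j" "(tent ^^ j) v = 1" "\<And>i. j < i \<Longrightarrow> (tent ^^ i) v = 0"
    and top: "Btop j = oscillate a b" "a \<le> b" and bot: "Bbot j = oscillate a' b'" "a' \<le> b'"
    and r: "r \<in> {-1<..<1}"
  shows "omega_limit rising_map (r, orbit_point v z) = {a..b} \<times> {1}"
    and "alpha_limit rising_map (r, orbit_point v z) = {a'..b'} \<times> {-1}"
proof -
  define x where "x = fiber_inv (orbit_point v z) r"
  have s: "orbit_point v z \<in> {-1<..<1}" using orbit_point_mem_open v by auto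
  have x: "x \<in> {-1<..<1}" unfolding x_def using fiber_inv_mem_open[OF r] .
  have r': "r \<in> {-1..1}" using r by auto
  have center: "center (orbit_point v z') = (if z' < 0 then Bbot j else Btop j) (slow_time (orbit_point v z'))"
    if "real j \<le> slow_time (orbit_point v z')" for z'
    using center_at_level[OF level(1) _ _ that] level fund_coord_orbit_point[OF v] orbit_point_sign[OF v, of z']
    by (auto simp: not_le)
  have "(rising_map ^^ k) (r, orbit_point v z) = (fiber (orbit_point v (z + int k)) x, orbit_point v (z + int k))" for k
    using funpow_transport[where h = f01, OF f01_mem_open r' s]
    unfolding rising_map_def x_def by (simp add: funpow_f01_orbit_point[OF v])
  then have "omega_limit rising_map (r, orbit_point v z)
      = subseq_limits (\<lambda>k. (fiber (orbit_point v (z + int k)) x, orbit_point v (z + int k)))"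
    unfolding omega_limit_eq_subseq_limits by simp
  also have "\<dots> = {a..b} \<times> {1}"
  proof (rule orbit_subseq_limits[OF x orbit_point_tendsto_1 _ _ top(2)])
    define c where "c = real_of_int z + 1 - log 2 (2 - v)"
    have c: "real_of_int z \<le> c" using v unfolding c_def by simp
    have "\<forall>\<^sub>F k in sequentially. depth (orbit_point v (z + int k)) = real k + c \<and>
        center (orbit_point v (z + int k)) = oscillate a b (slow_time (orbit_point v (z + int k)))"
      using eventually_ge_at_top[of "nat (int (j\<^sup>2) - z)"]
    proof eventually_elim
      case (elim k)
      then have zk: "int (j\<^sup>2) - z \<le> int k" using nat_le_iff by blast
      then have side: "0 \<le> z + int k" using of_nat_0_le_iff[of "j\<^sup>2"] by linarith
      then have depth_eq: "depth (orbit_point v (z + int k)) = real k + c"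
        using depth_orbit_point_nonneg[OF v, of "z + int k"] unfolding c_def by simp
      have "real_of_int (int (j\<^sup>2) - z) \<le> real_of_int (int k)"
        using zk by (rule of_int_le_iff[THEN iffD2])
      then have "real (j\<^sup>2) \<le> real k + c" using c by simp
      then have "real j \<le> slow_time (orbit_point v (z + int k))"
        unfolding slow_time_def depth_eq by (simp add: real_le_rsqrt)
      then show ?case
        using depth_eq center side top(1) by simp
    qed
    then show "\<forall>\<^sub>F k in sequentially. depth (orbit_point v (z + int k)) = real k + c"
      and "\<forall>\<^sub>F k in sequentially. center (orbit_point v (z + int k)) = oscillate a b (slow_time (orbit_point v (z + int k)))"
      by (auto elim: eventually_mono)
  qed
  finally show "omega_limit rising_map (r, orbit_point v z) = {a..b} \<times> {1}" .
  have "(inv_into sq rising_map ^^ k) (r, orbit_point v z)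
      = (fiber (orbit_point v (z - int k)) x, orbit_point v (z - int k))" for k
    using funpow_inv_into_rising_map[of "(r, orbit_point v z)" k] funpow_transport[where h = f01_inv, OF f01_inv_mem_open r' s]
      r' s unfolding x_def funpow_f01_inv_orbit_point[OF v] by (simp add: sq_eq)
  then have "alpha_limit rising_map (r, orbit_point v z)
      = subseq_limits (\<lambda>k. (fiber (orbit_point v (z - int k)) x, orbit_point v (z - int k)))"
    unfolding alpha_limit_def omega_limit_eq_subseq_limits by simp
  also have "\<dots> = {a'..b'} \<times> {-1}"
  proof (rule orbit_subseq_limits[OF x orbit_point_tendsto_neg1 _ _ bot(2)])
    define c where "c = - real_of_int z - 1 - log 2 (1 + v)"
    have c: "- real_of_int z - 2 \<le> c" using v unfolding c_def by simp
    have "\<forall>\<^sub>F k in sequentially. depth (orbit_point v (z - int k)) = real k + c \<and>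
        center (orbit_point v (z - int k)) = oscillate a' b' (slow_time (orbit_point v (z - int k)))"
      using eventually_ge_at_top[of "nat (int (j\<^sup>2) + z + 2)"]
    proof eventually_elim
      case (elim k)
      then have zk: "int (j\<^sup>2) + z + 2 \<le> int k" using nat_le_iff by blast
      then have side: "z - int k \<le> -2" using of_nat_0_le_iff[of "j\<^sup>2"] by linarith
      then have depth_eq: "depth (orbit_point v (z - int k)) = real k + c"
        using depth_orbit_point_neg[OF v, of "z - int k"] unfolding c_def by simp
      have "real_of_int (int (j\<^sup>2) + z + 2) \<le> real_of_int (int k)"
        using zk by (rule of_int_le_iff[THEN iffD2])
      then have "real (j\<^sup>2) \<le> real k + c" using c by simp
      then have "real j \<le> slow_time (orbit_point v (z - int k))"
        unfolding slow_time_def depth_eq by (simp add: real_le_rsqrt)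
      then show ?case
        using depth_eq center side bot(1) by simp
    qed
    then show "\<forall>\<^sub>F k in sequentially. depth (orbit_point v (z - int k)) = real k + c"
      and "\<forall>\<^sub>F k in sequentially. center (orbit_point v (z - int k)) = oscillate a' b' (slow_time (orbit_point v (z - int k)))"
      by (auto elim: eventually_mono)
  qed
  finally show "alpha_limit rising_map (r, orbit_point v z) = {a'..b'} \<times> {-1}" .
qed

lemma limits_on_orbit_set:
  assumes "s \<in> orbit_set n" "r \<in> {-1<..<1}" "a \<le> b" "a' \<le> b'"
    and "\<And>j. label j = n \<Longrightarrow> Btop j = oscillate a b \<and> Bbot j = oscillate a' b'"
  shows "omega_limit rising_map (r, s) = {a..b} \<times> {1}"
    and "alpha_limit rising_map (r, s) = {a'..b'} \<times> {-1}"
proof -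
  obtain v z where v: "v \<in> labelled_dyadics n" "s = orbit_point v z"
    using assms(1) unfolding orbit_set_iff by blast
  obtain j where "1 \<le> j" "label j = n" "(tent ^^ j) v = 1" "\<And>i. j < i \<Longrightarrow> (tent ^^ i) v = 0"
    using labelled_dyadics_level[OF v(1)] by blast
  then show "omega_limit rising_map (r, s) = {a..b} \<times> {1}"
    and "alpha_limit rising_map (r, s) = {a'..b'} \<times> {-1}"
    using limits_orbit_point[OF labelled_dyadics_mem_open[OF v(1)]] assms(2-5) unfolding v(2) by auto
qed

end

lemma rising_construction_oscillate:
  assumes "\<And>j. -1 \<le> a j \<and> a j \<le> b j \<and> b j \<le> 1" "\<And>j. -1 \<le> a' j \<and> a' j \<le> b' j \<and> b' j \<le> 1"
  shows "rising_construction (\<lambda>j. oscillate (a j) (b j)) (\<lambda>j. oscillate (a' j) (b' j))"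
proof
  fix j t t'
  show "oscillate (a j) (b j) t \<in> {-1..1}" "oscillate (a' j) (b' j) t \<in> {-1..1}"
    using oscillate_mem[of "a j" "b j" t] oscillate_mem[of "a' j" "b' j" t] assms[of j] by auto
  show "\<bar>oscillate (a j) (b j) t - oscillate (a j) (b j) t'\<bar> \<le> 4 * \<bar>t - t'\<bar>"
    "\<bar>oscillate (a' j) (b' j) t - oscillate (a' j) (b' j) t'\<bar> \<le> 4 * \<bar>t - t'\<bar>"
    using oscillate_lipschitz assms[of j] by blast+
qed (rule continuous_on_oscillate)+

lemma segment_of_calA:
  assumes "C \<in> calA"
  shows "C = {Inf (fst ` C)..Sup (fst ` C)} \<times> {1}"
    and "-1 \<le> Inf (fst ` C) \<and> Inf (fst ` C) \<le> Sup (fst ` C) \<and> Sup (fst ` C) \<le> 1"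
  using horizontal_segment[of C 1] assms unfolding calA_def Jline_def JJ_def by auto

lemma segment_of_calA':
  assumes "C \<in> calA'"
  shows "C = {Inf (fst ` C)..Sup (fst ` C)} \<times> {-1}"
    and "-1 \<le> Inf (fst ` C) \<and> Inf (fst ` C) \<le> Sup (fst ` C) \<and> Sup (fst ` C) \<le> 1"
  using horizontal_segment[of C "-1"] assms unfolding calA'_def Jline_def JJ_def by auto

theorem corollary3p3:
  fixes Nstar :: "nat set"
    and \<omega> \<alpha> :: "nat \<Rightarrow> (real \<times> real) set"
  assumes "Nstar \<noteq> {}"
    and "\<forall>n \<in> Nstar. \<omega> n \<in> calA"
    and "\<forall>n \<in> Nstar. \<alpha> n \<in> calA'"
  shows "\<exists>(S :: nat \<Rightarrow> real set) (f :: real \<times> real \<Rightarrow> real \<times> real).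
           (\<forall>m \<in> Nstar. \<forall>n \<in> Nstar. m \<noteq> n \<longrightarrow> S m \<inter> S n = {}) \<and>
           (\<forall>n \<in> Nstar. countable (S n) \<and> S n \<subseteq> {-1<..<1}) \<and>
           normally_rising f \<and>
           (\<forall>n \<in> Nstar. JJ \<subseteq> closure (S n) \<and>
              (\<forall>r \<in> {-1<..<1}. \<forall>s \<in> S n.
                  omega_limit f (r, s) = \<omega> n \<and> alpha_limit f (r, s) = \<alpha> n))"
proof -
  define lo :: "(nat \<Rightarrow> (real \<times> real) set) \<Rightarrow> nat \<Rightarrow> real"
    where "lo C j = (if label j \<in> Nstar then Inf (fst ` C (label j)) else 0)" for C j
  define hi :: "(nat \<Rightarrow> (real \<times> real) set) \<Rightarrow> nat \<Rightarrow> real"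
    where "hi C j = (if label j \<in> Nstar then Sup (fst ` C (label j)) else 0)" for C j
  have "-1 \<le> lo \<omega> j \<and> lo \<omega> j \<le> hi \<omega> j \<and> hi \<omega> j \<le> 1" "-1 \<le> lo \<alpha> j \<and> lo \<alpha> j \<le> hi \<alpha> j \<and> hi \<alpha> j \<le> 1" for j
    using segment_of_calA(2) segment_of_calA'(2) assms(2,3) unfolding lo_def hi_def by auto
  then interpret rising_construction "\<lambda>j. oscillate (lo \<omega> j) (hi \<omega> j)" "\<lambda>j. oscillate (lo \<alpha> j) (hi \<alpha> j)"
    by (rule rising_construction_oscillate)
  have "omega_limit rising_map (r, s) = \<omega> n \<and> alpha_limit rising_map (r, s) = \<alpha> n"
    if n: "n \<in> Nstar" and r: "r \<in> {-1<..<1}" and s: "s \<in> orbit_set n" for n r s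
  proof -
    have "omega_limit rising_map (r, s) = {Inf (fst ` \<omega> n)..Sup (fst ` \<omega> n)} \<times> {1}"
      "alpha_limit rising_map (r, s) = {Inf (fst ` \<alpha> n)..Sup (fst ` \<alpha> n)} \<times> {-1}"
      by (rule limits_on_orbit_set[OF s r];
          use segment_of_calA(2) segment_of_calA'(2) assms(2,3) n in \<open>simp add: lo_def hi_def\<close>)+
    moreover have "\<omega> n \<in> calA" "\<alpha> n \<in> calA'" using assms(2,3) n by blast+
    ultimately show ?thesis
      using segment_of_calA(1)[of "\<omega> n", symmetric] segment_of_calA'(1)[of "\<alpha> n", symmetric]
      by (simp only:)
  qed
  then show ?thesis
    by (intro exI[of _ orbit_set] exI[of _ rising_map])
      (simp add: orbit_set_disjoint countable_orbit_set orbit_set_subset normally_rising_rising_map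
        JJ_subset_closure_orbit_set)
qed

end
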